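(* Let $P_0,P_1\in\mathcal{P}(\mathbb{R}^d)$ and let $\gamma\in\mathcal{P}(\mathbb{R}^d\times\mathbb{R}^d)$ be a coupling with first and second marginals $P_0$ and $P_1$. Suppose that $X_t=(1-t)X_0+t\,X_1$ with $(X_0,X_1)\sim\gamma$, and that for all $t\in[0,1]$ we have $\mathbb{E}\,\|X_t\|^2<\infty$ and $\mathbb{E}\,\|\Pi_t(X_t)\|^2<\infty$, and that $t\mapsto\Pi_t(x)$ is continuous at $t=1$ for all $x\in\mathbb{R}^d$. Then we have $$\nabla\cdot(\rho_t\,\Pi_t)=0$$ only if there exists a measurable map $T:\mathbb{R}^d\to\mathbb{R}^d$ satisfying $T_\sharp P_0=P_1$ such that $$(\mathrm{id}\times T)_\sharp P_0=\gamma,$$ where $\mathrm{id}:\mathbb{R}^d\to\mathbb{R}^d$ is the identity map and $(\mathrm{id}\times T)(x)=(x,T(x))$. Moreover, the condition is sufficient for $t\in[0,1)$ provided the Jacobian of the map $T$ is positive semi-definite at every $x\in\mathbb{R}^d$. In particular, this holds when $T$ is a continuously differentiable optimal transport map (for the squared Euclidean cost) from $P_0$ to $P_1$, provided the process $X_t=(1-t)X_0+t\,T(X_0)$ satisfies $\mathbb{E}\,\|X_t\|^2<\infty$ and $\mathbb{E}\,\|\Pi_t(X_t)\|^2<\infty$ for all $t\in[0,1]$ and $t\mapsto\Pi_t(x)$ is continuous at $t=1$ for all $x\in\mathbb{R}^d$.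
   Context: For a stochastic process $(X_t)_{t\in[0,1]}$ on $\mathbb{R}^d$, $\rho_t$ denotes the density (w.r.t. Lebesgue measure) of the marginal law of $X_t$; $v_t(x)=\mathbb{E}[\dot X_t\mid X_t=x]$ is the conditional velocity; $\mathcal{C}_t(x)=\mathbb{E}[\dot X_t\otimes\dot X_t\mid X_t=x]$; and $\Pi_t(x)=\mathcal{C}_t(x)-v_t(x)\otimes v_t(x)$ is the conditional covariance (Reynolds stress) tensor. For a matrix field $V$, $(\nabla\cdot V)_j=\sum_i\partial_i V_{ij}$. Standing regularity assumptions: the marginal densities $\rho_t$ exist for all $t\in[0,1]$; sample paths $t\mapsto X_t(\omega)$ lie in $W^{2,2}([0,1];\mathbb{R}^d)$; the flow map $\phi_t$ of $\partial_t\phi_t(x)=v_t(\phi_t(x))$, $\phi_0(x)=x$, has $t\mapsto\phi_t(x)$ in $C^2$ and $x\mapsto\phi_t(x)$ a homeomorphism for each $t$; and $(t,x)\mapsto v_t(x)$ is jointly continuously differentiable. *)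

theory Defs
  imports "HOL-Analysis.Analysis" "HOL-Probability.Probability"
begin

text \<open>Points of R^d are modelled as real^'n for an arbitrary finite index type 'n (d = CARD('n)).
  d x d matrices are real^'n^'n; the norm of such a matrix is the Frobenius norm.\<close>

definition outer :: "real^'n \<Rightarrow> real^'n \<Rightarrow> real^'n^'n" where
  "outer v w = (\<chi> i j. v $ i * w $ j)"

definition interp :: "real \<Rightarrow> (real^'n) \<times> (real^'n) \<Rightarrow> real^'n" where
  "interp t p = (1 - t) *\<^sub>R fst p + t *\<^sub>R snd p"

definition vel :: "(real^'n) \<times> (real^'n) \<Rightarrow> real^'n" where
  "vel p = snd p - fst p"

text \<open>g is a version of the regression function y \<mapsto> E[Z | Y = y]: g is Borel,
  integrable w.r.t. the law of Y, and E[Z; Y \<in> A] = \<integral>_A g d(law of Y) for all Borel A.\<close>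
definition cond_exp_given ::
  "'a measure \<Rightarrow> ('a \<Rightarrow> 'b::euclidean_space) \<Rightarrow> ('a \<Rightarrow> 'c::euclidean_space) \<Rightarrow> ('b \<Rightarrow> 'c) \<Rightarrow> bool" where
  "cond_exp_given M Y Z g \<longleftrightarrow>
     Y \<in> borel_measurable M \<and> integrable M Z \<and> g \<in> borel_measurable borel \<and>
     integrable (distr M borel Y) g \<and>
     (\<forall>A\<in>sets borel. (LINT \<omega>:(Y -` A \<inter> space M)|M. Z \<omega>) = (LINT y:A|distr M borel Y. g y))"

definition reynolds :: "(real \<Rightarrow> real^'n \<Rightarrow> real^'n^'n) \<Rightarrow> (real \<Rightarrow> real^'n \<Rightarrow> real^'n) \<Rightarrow> real \<Rightarrow> real^'n \<Rightarrow> real^'n^'n" where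
  "reynolds C v t x = C t x - outer (v t x) (v t x)"

definition partial :: "'n \<Rightarrow> (real^'n \<Rightarrow> real) \<Rightarrow> real^'n \<Rightarrow> real" where
  "partial i f x = frechet_derivative f (at x) (axis i 1)"

fun Ck :: "nat \<Rightarrow> (real^'n \<Rightarrow> real) \<Rightarrow> bool" where
  "Ck 0 f = continuous_on UNIV f"
| "Ck (Suc k) f = ((\<forall>x. f differentiable (at x)) \<and> continuous_on UNIV f \<and> (\<forall>i. Ck k (partial i f)))"

definition test_fun :: "(real^'n \<Rightarrow> real) \<Rightarrow> bool" where
  "test_fun \<psi> \<longleftrightarrow> (\<forall>k. Ck k \<psi>) \<and> compact (closure {x. \<psi> x \<noteq> 0})"

definition weak_div_zero :: "(real^'n \<Rightarrow> real^'n^'n) \<Rightarrow> bool" where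
  "weak_div_zero V \<longleftrightarrow>
     (\<forall>\<psi>. test_fun \<psi> \<longrightarrow> (\<forall>j.
        integrable lborel (\<lambda>x. \<Sum>i\<in>UNIV. partial i \<psi> x * V x $ i $ j) \<and>
        (\<integral>x. (\<Sum>i\<in>UNIV. partial i \<psi> x * V x $ i $ j) \<partial>lborel) = 0))"

definition C1_on :: "('a::real_normed_vector) set \<Rightarrow> ('a \<Rightarrow> 'b::real_normed_vector) \<Rightarrow> bool" where
  "C1_on S f \<longleftrightarrow> (\<exists>f'. (\<forall>p\<in>S. (f has_derivative blinfun_apply (f' p)) (at p within S)) \<and> continuous_on S f')"

definition C2_path_on :: "real set \<Rightarrow> (real \<Rightarrow> 'b::real_normed_vector) \<Rightarrow> bool" where
  "C2_path_on I c \<longleftrightarrow> (\<exists>c1 c2. (\<forall>t\<in>I. (c has_vector_derivative c1 t) (at t within I) \<and>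
                                      (c1 has_vector_derivative c2 t) (at t within I)) \<and> continuous_on I c2)"

definition coupling :: "(real^'n) measure \<Rightarrow> (real^'n) measure \<Rightarrow> ((real^'n) \<times> (real^'n)) measure \<Rightarrow> bool" where
  "coupling P0 P1 \<pi> \<longleftrightarrow> prob_space \<pi> \<and> sets \<pi> = sets borel \<and>
     distr \<pi> borel fst = P0 \<and> distr \<pi> borel snd = P1"

definition ot_map :: "(real^'n) measure \<Rightarrow> (real^'n) measure \<Rightarrow> (real^'n \<Rightarrow> real^'n) \<Rightarrow> bool" where
  "ot_map P0 P1 T \<longleftrightarrow> T \<in> borel_measurable borel \<and> distr P0 borel T = P1 \<and>
     (\<forall>\<pi>. coupling P0 P1 \<pi> \<longrightarrow>
        (\<integral>\<^sup>+ x. ennreal ((norm (x - T x))\<^sup>2) \<partial>P0) \<le> (\<integral>\<^sup>+ p. ennreal ((norm (fst p - snd p))\<^sup>2) \<partial>\<pi>))"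

end

(*
  Necessity. At t = 0 the Reynolds stress is the conditional covariance of X1 - X0 given X0.
  Testing the divergence condition against cutoffs of the coordinate functions shows that
  rho0 Pi0 has zero mean, so the conditional variance of X1 - X0 given X0 vanishes:
  X1 = X0 + v0(X0) almost surely, and T = id + v0 is the transport map.

  Sufficiency. If X1 = T X0 with T monotone on a closed set carrying P0 (which holds on all of
  R^d for a positive semi-definite Jacobian, and on the support of P0 for an optimal map, since
  otherwise exchanging the targets of nearby mass would lower the cost), then for t < 1 the map
  x |-> (1 - t) x + t T x has a Lipschitz inverse there. So X1 - X0 is a Borel function of X_t,
  its conditional covariance given X_t vanishes, and rho_t Pi_t = 0 almost everywhere.
*)
theory Submission
  imports Defs "HOL-Computational_Algebra.Polynomial"
begin

section \<open>Smooth test functions\<close>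

fun flat_poly :: "nat \<Rightarrow> real poly" where
  "flat_poly 0 = 1"
| "flat_poly (Suc m) = [:0, 0, 1:] * (flat_poly m - pderiv (flat_poly m))"

text \<open>\<open>flat m\<close> is the \<open>m\<close>-th derivative of the smooth function that is \<open>exp (-1/u)\<close> for \<open>u > 0\<close>
  and \<open>0\<close> otherwise.\<close>
definition flat :: "nat \<Rightarrow> real \<Rightarrow> real" where
  "flat m u = (if u > 0 then poly (flat_poly m) (1 / u) * exp (- 1 / u) else 0)"

lemma poly_times_exp_neg_tendsto_0: "((\<lambda>w. poly p w * exp (- w)) \<longlongrightarrow> (0::real)) at_top"
proof -
  have "(\<lambda>w. poly p w * exp (- w)) = (\<lambda>w. \<Sum>i\<le>degree p. coeff p i * (w ^ i / exp w))"
    by (auto simp: poly_altdef sum_distrib_right exp_minus field_simps sum_divide_distrib)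
  then show ?thesis
    by (simp only:) (intro tendsto_null_sum tendsto_mult_right_zero tendsto_power_div_exp_0)
qed

lemma poly_inverse_times_exp_tendsto_0:
  "((\<lambda>u. poly p (1 / u) * exp (- 1 / u)) \<longlongrightarrow> (0::real)) (at_right 0)"
proof -
  have "filterlim (\<lambda>u::real. 1 / u) at_top (at_right 0)"
    using filterlim_inverse_at_top_right by (simp add: inverse_eq_divide)
  from filterlim_compose[OF poly_times_exp_neg_tendsto_0 this] show ?thesis
    by (simp add: o_def)
qed

lemma has_real_derivative_flat: "(flat m has_real_derivative flat (Suc m) u) (at u)"
proof (cases u "0::real" rule: linorder_cases)
  case less
  have "((\<lambda>_. 0) has_real_derivative flat (Suc m) u) (at u)"
    using less by (simp add: flat_def)
  then show ?thesis
    by (rule has_field_derivative_transform_within_open[where S = "{..<0}"])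
      (use less in \<open>auto simp: flat_def\<close>)
next
  case equal
  have "((\<lambda>y. poly ([:0, 1:] * flat_poly m) (1 / y) * exp (- 1 / y)) \<longlongrightarrow> 0) (at_right 0)"
    by (rule poly_inverse_times_exp_tendsto_0)
  then have "((\<lambda>y. (flat m y - flat m 0) / (y - 0)) \<longlongrightarrow> 0) (at_right 0)"
    by (rule Lim_transform_eventually)
      (auto simp: flat_def eventually_at_right_field intro: exI[of _ 1])
  moreover have "((\<lambda>y. (flat m y - flat m 0) / (y - 0)) \<longlongrightarrow> 0) (at_left 0)"
    by (rule tendsto_eventually)
      (auto simp: flat_def eventually_at_left_field intro: exI[of _ "-1"])
  ultimately show ?thesis
    using equal by (simp add: has_field_derivative_iff filterlim_at_split flat_def)
next
  case greater
  have "((\<lambda>u. poly (flat_poly m) (1 / u) * exp (- 1 / u)) has_real_derivative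
      poly (pderiv (flat_poly m)) (1 / u) * (- 1 / u\<^sup>2) * exp (- 1 / u)
        + poly (flat_poly m) (1 / u) * (exp (- 1 / u) * (1 / u\<^sup>2))) (at u)"
    using greater
    by (auto intro!: derivative_eq_intros DERIV_chain2[OF poly_DERIV]
        simp: power2_eq_square field_simps)
  also have "poly (pderiv (flat_poly m)) (1 / u) * (- 1 / u\<^sup>2) * exp (- 1 / u)
        + poly (flat_poly m) (1 / u) * (exp (- 1 / u) * (1 / u\<^sup>2)) = flat (Suc m) u"
    using greater by (simp add: flat_def algebra_simps power2_eq_square divide_simps)
  finally show ?thesis
    by (rule has_field_derivative_transform_within_open[where S = "{0<..}"])
      (use greater in \<open>auto simp: flat_def\<close>)
qed

lemma continuous_on_flat: "continuous_on UNIV (flat m)"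
  using has_real_derivative_flat by (meson DERIV_isCont continuous_at_imp_continuous_on)

lemma flat_nonzero_imp_pos: "flat m u \<noteq> 0 \<Longrightarrow> u > 0"
  by (auto simp: flat_def split: if_splits)

lemma abs_flat_0_le_1: "\<bar>flat 0 u\<bar> \<le> 1"
  by (auto simp: flat_def)

lemma flat_0_1_nonzero: "flat 0 1 \<noteq> 0"
  by (simp add: flat_def)

lemma flat_bounded_le_1: "\<exists>B. \<forall>u\<le>1. \<bar>flat m u\<bar> \<le> B"
proof -
  have "compact (flat m ` {0..1})"
    by (rule compact_continuous_image) (auto intro: continuous_on_subset[OF continuous_on_flat])
  then obtain B where B: "\<forall>y\<in>flat m ` {0..1}. \<bar>y\<bar> \<le> B"
    using compact_imp_bounded bounded_real by metis
  have "\<bar>flat m u\<bar> \<le> B" if "u \<le> 1" for u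
  proof (cases "u > 0")
    case False
    have "\<bar>flat m 0\<bar> \<le> B" using B by auto
    with False show ?thesis by (simp add: flat_def)
  qed (use B that in auto)
  then show ?thesis by blast
qed

inductive_set smooth_class :: "(real^'n \<Rightarrow> real) set" where
  const: "(\<lambda>x. c) \<in> smooth_class"
| coord: "(\<lambda>x. x $ i) \<in> smooth_class"
| add: "f \<in> smooth_class \<Longrightarrow> g \<in> smooth_class \<Longrightarrow> (\<lambda>x. f x + g x) \<in> smooth_class"
| mult: "f \<in> smooth_class \<Longrightarrow> g \<in> smooth_class \<Longrightarrow> (\<lambda>x. f x * g x) \<in> smooth_class"
| flat_comp: "f \<in> smooth_class \<Longrightarrow> (\<lambda>x. flat m (f x)) \<in> smooth_class"

lemma smooth_class_sum:
  "finite A \<Longrightarrow> (\<And>a. a \<in> A \<Longrightarrow> f a \<in> smooth_class) \<Longrightarrow> (\<lambda>x. \<Sum>a\<in>A. f a x) \<in> smooth_class"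
  by (induction A rule: finite_induct) (auto intro: smooth_class.intros)

lemma smooth_class_has_derivative:
  assumes "f \<in> smooth_class"
  shows "\<exists>D. (\<forall>x. (f has_derivative D x) (at x)) \<and> (\<forall>i. (\<lambda>x. D x (axis i 1)) \<in> smooth_class)"
  using assms
proof induction
  case (const c)
  show ?case by (rule exI[of _ "\<lambda>x h. 0"]) (auto intro: smooth_class.intros)
next
  case (coord i)
  show ?case
    by (intro exI[of _ "\<lambda>x h. h $ i"])
      (auto intro!: bounded_linear.has_derivative[OF bounded_linear_vec_nth] smooth_class.const)
next
  case (add f g)
  then obtain Df Dg where "\<forall>x. (f has_derivative Df x) (at x)" "\<forall>i. (\<lambda>x. Df x (axis i 1)) \<in> smooth_class"
    and "\<forall>x. (g has_derivative Dg x) (at x)" "\<forall>i. (\<lambda>x. Dg x (axis i 1)) \<in> smooth_class"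
    by blast
  then show ?case
    by (intro exI[of _ "\<lambda>x h. Df x h + Dg x h"]) (auto intro!: has_derivative_add smooth_class.add)
next
  case (mult f g)
  then obtain Df Dg where "\<forall>x. (f has_derivative Df x) (at x)" "\<forall>i. (\<lambda>x. Df x (axis i 1)) \<in> smooth_class"
    and "\<forall>x. (g has_derivative Dg x) (at x)" "\<forall>i. (\<lambda>x. Dg x (axis i 1)) \<in> smooth_class"
    by blast
  with mult.hyps show ?case
    by (intro exI[of _ "\<lambda>x h. f x * Dg x h + Df x h * g x"])
      (auto intro!: has_derivative_mult smooth_class.add smooth_class.mult)
next
  case (flat_comp f m)
  then obtain Df where Df: "\<forall>x. (f has_derivative Df x) (at x)"
    "\<forall>i. (\<lambda>x. Df x (axis i 1)) \<in> smooth_class"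
    by blast
  have "((\<lambda>x. flat m (f x)) has_derivative (\<lambda>h. flat (Suc m) (f x) * Df x h)) (at x)" for x
    using has_derivative_compose[OF Df(1)[rule_format, of x]
        has_real_derivative_flat[unfolded has_field_derivative_def]]
    by (simp add: o_def)
  with Df(2) flat_comp.hyps show ?case
    by (intro exI[of _ "\<lambda>x h. flat (Suc m) (f x) * Df x h"])
      (auto intro!: smooth_class.mult smooth_class.flat_comp)
qed

lemma smooth_class_partial:
  assumes "f \<in> smooth_class"
  shows "\<forall>x. f differentiable (at x)" and "partial i f \<in> smooth_class"
proof -
  obtain D where D: "\<forall>x. (f has_derivative D x) (at x)" "\<forall>i. (\<lambda>x. D x (axis i 1)) \<in> smooth_class"
    using smooth_class_has_derivative[OF assms] by blast
  then show "\<forall>x. f differentiable (at x)"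
    unfolding differentiable_def by blast
  have "partial i f = (\<lambda>x. D x (axis i 1))"
    unfolding partial_def using D(1) frechet_derivative_at by metis
  with D(2) show "partial i f \<in> smooth_class" by simp
qed

lemma smooth_class_imp_Ck: "f \<in> smooth_class \<Longrightarrow> Ck k f"
proof (induction k arbitrary: f)
  case 0
  then show ?case
    using smooth_class_partial(1) differentiable_imp_continuous_within
    by (fastforce intro: continuous_at_imp_continuous_on)
next
  case (Suc k)
  then show ?case
    using smooth_class_partial differentiable_imp_continuous_within
    by (fastforce intro: continuous_at_imp_continuous_on)
qed

definition coord_cutoff :: "'n \<Rightarrow> real \<Rightarrow> real^'n \<Rightarrow> real" where
  "coord_cutoff k R x = x $ k * flat 0 (1 - (norm x / R)\<^sup>2)"

lemma coord_cutoff_smooth: "coord_cutoff k R \<in> smooth_class"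
proof -
  have q_eq: "1 - (norm x / R)\<^sup>2 = 1 + (- inverse (R\<^sup>2)) * (\<Sum>l\<in>UNIV. x $ l * x $ l)"
    for x :: "real^'n"
    unfolding power_divide power2_norm_eq_inner inner_vec_def inner_real_def
    by (simp add: divide_inverse mult.commute)
  have "coord_cutoff k R = (\<lambda>x. x $ k * flat 0 (1 + (- inverse (R\<^sup>2)) * (\<Sum>l\<in>UNIV. x $ l * x $ l)))"
    by (intro ext) (simp only: coord_cutoff_def q_eq)
  then show ?thesis
    by (simp only:) (intro smooth_class.intros smooth_class_sum; simp)
qed

lemma test_fun_coord_cutoff:
  assumes "R > 0"
  shows "test_fun (coord_cutoff k R)"
proof -
  have "{x. coord_cutoff k R x \<noteq> 0} \<subseteq> cball 0 R"
  proof
    fix x assume "x \<in> {x. coord_cutoff k R x \<noteq> 0}"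
    then have "(norm x / R)\<^sup>2 < 1\<^sup>2"
      using flat_nonzero_imp_pos by (fastforce simp: coord_cutoff_def)
    then show "x \<in> cball 0 R"
      using assms by (auto dest!: power_less_imp_less_base simp: field_simps)
  qed
  then have "bounded {x. coord_cutoff k R x \<noteq> 0}"
    using bounded_cball bounded_subset by blast
  then show ?thesis
    unfolding test_fun_def using smooth_class_imp_Ck[OF coord_cutoff_smooth] compact_closure by blast
qed

lemma partial_coord_cutoff:
  "partial i (coord_cutoff k R) x =
     (if i = k then flat 0 (1 - (norm x / R)\<^sup>2) else 0)
     - 2 * x $ k * x $ i / R\<^sup>2 * flat 1 (1 - (norm x / R)\<^sup>2)"
proof -
  let ?q = "\<lambda>x::real^'n. 1 - (norm x / R)\<^sup>2"
  have q_eq: "?q = (\<lambda>x. 1 - inverse (R\<^sup>2) * (x \<bullet> x))"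
    unfolding power_divide power2_norm_eq_inner by (simp add: divide_inverse mult.commute)
  have "(?q has_derivative (\<lambda>h. - 2 * (x \<bullet> h) / R\<^sup>2)) (at x)"
    unfolding q_eq
    by (rule derivative_eq_intros refl)+ (simp add: fun_eq_iff inner_commute divide_inverse)
  from has_derivative_compose[OF this has_real_derivative_flat[unfolded has_field_derivative_def]]
  have "((\<lambda>x. flat 0 (?q x)) has_derivative (\<lambda>h. flat 1 (?q x) * (- 2 * (x \<bullet> h) / R\<^sup>2))) (at x)"
    by (simp add: o_def)
  then have "(coord_cutoff k R has_derivative
      (\<lambda>h. x $ k * (flat 1 (?q x) * (- 2 * (x \<bullet> h) / R\<^sup>2)) + h $ k * flat 0 (?q x))) (at x)"
    unfolding coord_cutoff_def
    by (intro has_derivative_mult bounded_linear_imp_has_derivative bounded_linear_vec_nth)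
  moreover have "axis i (1::real) $ k = (if i = k then 1 else 0)"
    by (simp add: axis_def)
  ultimately show ?thesis
    unfolding partial_def by (simp add: frechet_derivative_at[symmetric] inner_axis)
qed

lemma partial_coord_cutoff_bounded:
  obtains B where "\<And>i k R x. R > 0 \<Longrightarrow> \<bar>partial i (coord_cutoff k R) x\<bar> \<le> B"
proof -
  obtain B where B: "\<And>u. u \<le> 1 \<Longrightarrow> \<bar>flat 1 u\<bar> \<le> B"
    using flat_bounded_le_1 by blast
  have "\<bar>partial i (coord_cutoff k R) x\<bar> \<le> 1 + 2 * B" if R: "R > 0" for i k R and x :: "real^'n"
  proof -
    let ?q = "1 - (norm x / R)\<^sup>2"
    have "\<bar>2 * x $ k * x $ i / R\<^sup>2 * flat 1 ?q\<bar> \<le> 2 * B"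
    proof (cases "flat 1 ?q = 0")
      case True
      then show ?thesis using B[of 0] by simp
    next
      case False
      then have "(norm x)\<^sup>2 < R\<^sup>2"
        using flat_nonzero_imp_pos R by (fastforce simp: field_simps)
      moreover have "\<bar>x $ k\<bar> * \<bar>x $ i\<bar> \<le> (norm x)\<^sup>2"
        unfolding power2_eq_square by (intro mult_mono component_le_norm_cart) auto
      ultimately have "\<bar>x $ k\<bar> * \<bar>x $ i\<bar> / R\<^sup>2 \<le> 1"
        using R by simp
      moreover have "\<bar>flat 1 ?q\<bar> \<le> B"
        by (rule B) simp
      ultimately show ?thesis
        using mult_mono[of "\<bar>x $ k\<bar> * \<bar>x $ i\<bar> / R\<^sup>2" 1 "\<bar>flat 1 ?q\<bar>" B]
        by (simp add: abs_mult)
    qed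
    moreover have "\<bar>if i = k then flat 0 ?q else 0\<bar> \<le> 1"
      using abs_flat_0_le_1 by simp
    ultimately show ?thesis
      unfolding partial_coord_cutoff by linarith
  qed
  then show ?thesis using that by blast
qed

lemma partial_coord_cutoff_tendsto:
  "(\<lambda>n. partial i (coord_cutoff k (real (Suc n))) x) \<longlonglongrightarrow> (if i = k then flat 0 1 else 0)"
proof -
  have inv: "(\<lambda>n. inverse (real (Suc n) ^ 2)) \<longlonglongrightarrow> 0"
    using tendsto_power[OF LIMSEQ_inverse_real_of_nat, of 2] by (simp add: power_inverse)
  have "(\<lambda>n. 1 - (norm x)\<^sup>2 * inverse (real (Suc n) ^ 2)) \<longlonglongrightarrow> 1 - (norm x)\<^sup>2 * 0"
    by (intro tendsto_intros inv)
  then have q: "(\<lambda>n. 1 - (norm x / real (Suc n))\<^sup>2) \<longlonglongrightarrow> 1"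
    by (simp only: power_divide divide_inverse[of "(norm x)\<^sup>2"] mult_zero_right diff_zero)
  have "(\<lambda>n. flat m (1 - (norm x / real (Suc n))\<^sup>2)) \<longlonglongrightarrow> flat m 1" for m
    by (rule isCont_tendsto_compose[OF _ q])
      (meson continuous_on_flat continuous_on_eq_continuous_at open_UNIV UNIV_I)
  from this[of 0] this[of 1]
  have "(\<lambda>n. (if i = k then flat 0 (1 - (norm x / real (Suc n))\<^sup>2) else 0)
      - 2 * x $ k * x $ i * inverse (real (Suc n) ^ 2) * flat 1 (1 - (norm x / real (Suc n))\<^sup>2))
      \<longlonglongrightarrow> (if i = k then flat 0 1 else 0) - 2 * x $ k * x $ i * 0 * flat 1 1"
    by (intro tendsto_intros inv) auto
  then show ?thesis
    unfolding partial_coord_cutoff by (simp add: divide_inverse)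
qed

text \<open>Test against \<open>coord_cutoff k R\<close>: its gradient tends boundedly to \<open>flat 0 1 \<cdot> e\<^sub>k\<close> as \<open>R \<rightarrow> \<infinity>\<close>.\<close>
lemma integral_weak_div_zero_eq_0:
  fixes V :: "real^'n \<Rightarrow> real^'n^'n"
  assumes div: "weak_div_zero V" and int: "\<And>i j. integrable lborel (\<lambda>x. V x $ i $ j)"
  shows "(\<integral>x. V x $ k $ j \<partial>lborel) = 0"
proof -
  obtain B where B: "\<And>i k R (x :: real^'n). R > 0 \<Longrightarrow> \<bar>partial i (coord_cutoff k R) x\<bar> \<le> B"
    by (rule partial_coord_cutoff_bounded[where 'a = 'n]) (erule that)
  define s where "s n x = (\<Sum>i\<in>UNIV. partial i (coord_cutoff k (real (Suc n))) x * V x $ i $ j)"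
    for n x
  have "integral\<^sup>L lborel (s n) = 0" for n
    using div test_fun_coord_cutoff[of "real (Suc n)" k] unfolding weak_div_zero_def s_def by auto
  moreover have "(\<lambda>n. integral\<^sup>L lborel (s n)) \<longlonglongrightarrow> (\<integral>x. flat 0 1 * V x $ k $ j \<partial>lborel)"
  proof (rule integral_dominated_convergence[where w = "\<lambda>x. \<Sum>i\<in>UNIV. B * \<bar>V x $ i $ j\<bar>"])
    have "continuous_on UNIV (partial i (coord_cutoff k R))" for i R
      using smooth_class_imp_Ck[OF coord_cutoff_smooth, of "Suc 0" k R] by simp
    then have "partial i (coord_cutoff k R) \<in> borel_measurable lborel" for i R
      by (simp add: borel_measurable_continuous_onI)
    then show "s n \<in> borel_measurable lborel" for n
      unfolding s_def using int by (intro borel_measurable_sum borel_measurable_times) auto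
    show "(\<lambda>x. flat 0 1 * V x $ k $ j) \<in> borel_measurable lborel"
      using int by auto
    show "integrable lborel (\<lambda>x. \<Sum>i\<in>UNIV. B * \<bar>V x $ i $ j\<bar>)"
      using int by auto
    show "AE x in lborel. (\<lambda>n. s n x) \<longlonglongrightarrow> flat 0 1 * V x $ k $ j"
    proof (rule AE_I2)
      fix x
      have "(\<lambda>n. s n x) \<longlonglongrightarrow> (\<Sum>i\<in>UNIV. (if i = k then flat 0 1 else 0) * V x $ i $ j)"
        unfolding s_def by (intro tendsto_intros partial_coord_cutoff_tendsto)
      then show "(\<lambda>n. s n x) \<longlonglongrightarrow> flat 0 1 * V x $ k $ j"
        by (simp add: if_distrib[of "\<lambda>c. c * _"] cong: if_cong)
    qed
    show "AE x in lborel. norm (s n x) \<le> (\<Sum>i\<in>UNIV. B * \<bar>V x $ i $ j\<bar>)" for n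
    proof (rule AE_I2)
      fix x
      have "norm (s n x) \<le> (\<Sum>i\<in>UNIV. \<bar>partial i (coord_cutoff k (real (Suc n))) x\<bar> * \<bar>V x $ i $ j\<bar>)"
        unfolding s_def real_norm_def abs_mult[symmetric] by (rule sum_abs)
      also have "\<dots> \<le> (\<Sum>i\<in>UNIV. B * \<bar>V x $ i $ j\<bar>)"
        by (intro sum_mono mult_right_mono B) simp_all
      finally show "norm (s n x) \<le> (\<Sum>i\<in>UNIV. B * \<bar>V x $ i $ j\<bar>)" .
    qed
  qed
  ultimately have "(\<integral>x. flat 0 1 * V x $ k $ j \<partial>lborel) = 0"
    by (simp add: LIMSEQ_const_iff)
  then show ?thesis
    using flat_0_1_nonzero by simp
qed

section \<open>Regression functions\<close>

lemma borel_measurable_vec_nth [measurable (raw)]: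
  "f \<in> borel_measurable M \<Longrightarrow> (\<lambda>x. (f x :: 'b::euclidean_space^'n) $ i) \<in> borel_measurable M"
  using measurable_compose[of f M borel "\<lambda>v. v $ i" borel]
  by (simp add: borel_measurable_continuous_onI linear_continuous_on[OF bounded_linear_vec_nth])

lemma borel_measurable_vec_lambda:
  assumes "\<And>i. (\<lambda>x. f x i) \<in> borel_measurable M"
  shows "(\<lambda>x. (\<chi> i. f x i) :: 'b::euclidean_space^'n) \<in> borel_measurable M"
  unfolding borel_measurable_euclidean_space[where 'c = "'b^'n"]
  using assms by (auto simp: Basis_vec_def inner_axis)

lemma borel_measurable_outer [measurable (raw)]:
  "f \<in> borel_measurable M \<Longrightarrow> g \<in> borel_measurable M \<Longrightarrow> (\<lambda>x. outer (f x) (g x)) \<in> borel_measurable M"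
  unfolding outer_def by (intro borel_measurable_vec_lambda borel_measurable_times borel_measurable_vec_nth)

lemma set_integral_distr_eq:
  fixes h :: "'b::euclidean_space \<Rightarrow> 'c::euclidean_space"
  assumes [measurable]: "Y \<in> borel_measurable M" "h \<in> borel_measurable borel" "B \<in> sets borel"
  shows "(LINT y:B|distr M borel Y. h y) = (LINT \<omega>:(Y -` B \<inter> space M)|M. h (Y \<omega>))"
proof -
  have "(LINT y:B|distr M borel Y. h y) = (\<integral>\<omega>. indicator B (Y \<omega>) *\<^sub>R h (Y \<omega>) \<partial>M)"
    unfolding set_lebesgue_integral_def by (subst integral_distr) auto
  also have "\<dots> = (LINT \<omega>:(Y -` B \<inter> space M)|M. h (Y \<omega>))"
    unfolding set_lebesgue_integral_def
    by (rule Bochner_Integration.integral_cong) (auto split: split_indicator)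
  finally show ?thesis .
qed

lemma set_integral_bounded_linear:
  fixes f :: "'a \<Rightarrow> 'b::euclidean_space"
  assumes "bounded_linear L" "integrable M f" "A \<in> sets M"
  shows "(LINT x:A|M. L (f x)) = L (LINT x:A|M. f x)"
proof -
  have "(LINT x:A|M. L (f x)) = (\<integral>x. L (indicator A x *\<^sub>R f x) \<partial>M)"
    unfolding set_lebesgue_integral_def
    using linear_scale[OF bounded_linear.linear[OF assms(1)]] by simp
  also have "\<dots> = L (LINT x:A|M. f x)"
    unfolding set_lebesgue_integral_def
    by (rule integral_bounded_linear[OF assms(1) integrable_mult_indicator[OF assms(3,2)]])
  finally show ?thesis .
qed

lemma cond_exp_given_set_integral:
  assumes ce: "cond_exp_given M Y Z g" and B: "B \<in> sets borel"
  shows "(LINT \<omega>:(Y -` B \<inter> space M)|M. Z \<omega>) = (LINT \<omega>:(Y -` B \<inter> space M)|M. g (Y \<omega>))"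
  using ce B set_integral_distr_eq[of Y M g B] unfolding cond_exp_given_def by auto

lemma cond_exp_given_integrable_comp:
  assumes "cond_exp_given M Y Z g"
  shows "integrable M (\<lambda>\<omega>. g (Y \<omega>))"
  using assms integrable_distr_eq[of Y M borel g] unfolding cond_exp_given_def by auto

lemma cond_exp_given_integral:
  assumes "cond_exp_given M Y Z g"
  shows "(\<integral>\<omega>. Z \<omega> \<partial>M) = (\<integral>\<omega>. g (Y \<omega>) \<partial>M)"
  using cond_exp_given_set_integral[OF assms sets.top] assms
    set_integral_space[of M Z] set_integral_space[OF cond_exp_given_integrable_comp[OF assms]]
  unfolding cond_exp_given_def by (simp add: measurable_space Int_absorb1 subsetI)

lemma cond_exp_given_bounded_linear:
  fixes L :: "'c::euclidean_space \<Rightarrow> 'd::euclidean_space"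
  assumes ce: "cond_exp_given M Y Z g" and L: "bounded_linear L"
  shows "cond_exp_given M Y (\<lambda>\<omega>. L (Z \<omega>)) (\<lambda>y. L (g y))"
proof -
  have Lm: "L \<in> borel_measurable borel"
    using L by (intro borel_measurable_continuous_onI linear_continuous_on)
  have Y: "Y \<in> borel_measurable M" and Z: "integrable M Z" and "g \<in> borel_measurable borel"
    and g: "integrable (distr M borel Y) g"
    and ce_sets: "\<And>A. A \<in> sets borel \<Longrightarrow>
      (LINT \<omega>:(Y -` A \<inter> space M)|M. Z \<omega>) = (LINT y:A|distr M borel Y. g y)"
    using ce unfolding cond_exp_given_def by auto
  moreover have "(LINT \<omega>:(Y -` A \<inter> space M)|M. L (Z \<omega>)) = (LINT y:A|distr M borel Y. L (g y))"
    if A: "A \<in> sets borel" for A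
  proof -
    have "(LINT \<omega>:(Y -` A \<inter> space M)|M. L (Z \<omega>)) = L (LINT \<omega>:(Y -` A \<inter> space M)|M. Z \<omega>)"
      using measurable_sets[OF Y A] by (rule set_integral_bounded_linear[OF L Z])
    also have "\<dots> = L (LINT y:A|distr M borel Y. g y)"
      by (simp only: ce_sets[OF A])
    also have "\<dots> = (LINT y:A|distr M borel Y. L (g y))"
      using A by (intro set_integral_bounded_linear[OF L g, symmetric]) simp
    finally show ?thesis .
  qed
  ultimately show ?thesis
    unfolding cond_exp_given_def
    using L Lm by (auto intro: integrable_bounded_linear measurable_compose)
qed

lemma cond_exp_given_comp:
  assumes [measurable]: "Y \<in> borel_measurable M" "h \<in> borel_measurable borel"
    and Z: "integrable M Z" and ae: "AE \<omega> in M. Z \<omega> = h (Y \<omega>)"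
  shows "cond_exp_given M Y Z h"
proof -
  have [measurable]: "Z \<in> borel_measurable M"
    using Z by (rule borel_measurable_integrable)
  have hY: "integrable M (\<lambda>\<omega>. h (Y \<omega>))"
    by (rule integrable_cong_AE_imp[OF Z _ ae]) measurable
  have "(LINT \<omega>:(Y -` A \<inter> space M)|M. Z \<omega>) = (LINT y:A|distr M borel Y. h y)"
    if A[measurable]: "A \<in> sets borel" for A
  proof -
    have "(LINT \<omega>:(Y -` A \<inter> space M)|M. Z \<omega>) = (LINT \<omega>:(Y -` A \<inter> space M)|M. h (Y \<omega>))"
      unfolding set_lebesgue_integral_def
    proof (rule integral_cong_AE)
      show "AE \<omega> in M. indicator (Y -` A \<inter> space M) \<omega> *\<^sub>R Z \<omega>
          = indicator (Y -` A \<inter> space M) \<omega> *\<^sub>R h (Y \<omega>)"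
        using ae by eventually_elim simp
    qed measurable
    then show ?thesis
      by (simp add: set_integral_distr_eq)
  qed
  moreover have "integrable (distr M borel Y) h"
    using hY by (simp add: integrable_distr_eq)
  ultimately show ?thesis
    unfolding cond_exp_given_def using Z by simp
qed

lemma cond_exp_given_unique:
  assumes g: "cond_exp_given M Y Z g" and h: "cond_exp_given M Y Z h"
  shows "AE y in distr M borel Y. g y = h y"
proof -
  have "AE y in distr M borel Y. g y \<bullet> b = h y \<bullet> b" for b
  proof (rule density_unique_real)
    show "integrable (distr M borel Y) (\<lambda>y. g y \<bullet> b)" "integrable (distr M borel Y) (\<lambda>y. h y \<bullet> b)"
      using g h unfolding cond_exp_given_def by auto
    fix A assume "A \<in> sets (distr M borel Y)"
    then show "(LINT y:A|distr M borel Y. g y \<bullet> b) = (LINT y:A|distr M borel Y. h y \<bullet> b)"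
      using g h unfolding cond_exp_given_def
      by (simp add: set_integral_bounded_linear[OF bounded_linear_inner_left])
  qed
  then have "AE y in distr M borel Y. \<forall>b\<in>Basis. g y \<bullet> b = h y \<bullet> b"
    by (simp add: AE_finite_allI)
  then show ?thesis
    by eventually_elim (metis euclidean_eqI)
qed

lemma integrable_mult_if_square_integrable:
  fixes f g :: "'a \<Rightarrow> real"
  assumes "integrable M (\<lambda>x. (f x)\<^sup>2)" "integrable M (\<lambda>x. (g x)\<^sup>2)"
    and [measurable]: "f \<in> borel_measurable M" "g \<in> borel_measurable M"
  shows "integrable M (\<lambda>x. f x * g x)"
proof (rule Bochner_Integration.integrable_bound)
  show "integrable M (\<lambda>x. (f x)\<^sup>2 + (g x)\<^sup>2)"
    using assms(1,2) by (rule Bochner_Integration.integrable_add)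
  have "\<bar>f x * g x\<bar> \<le> (f x)\<^sup>2 + (g x)\<^sup>2" for x
  proof -
    have "2 * \<bar>f x\<bar> * \<bar>g x\<bar> \<le> \<bar>f x\<bar>\<^sup>2 + \<bar>g x\<bar>\<^sup>2"
      by (rule sum_squares_bound)
    moreover have "0 \<le> \<bar>f x\<bar> * \<bar>g x\<bar>"
      by simp
    ultimately show ?thesis
      unfolding abs_mult power2_abs by linarith
  qed
  then show "AE x in M. norm (f x * g x) \<le> norm ((f x)\<^sup>2 + (g x)\<^sup>2)"
    by (intro AE_I2) (simp only: real_norm_def abs_of_nonneg[OF sum_power2_ge_zero])
qed measurable

text \<open>Tower property, via the conditional expectation \<open>real_cond_exp\<close> with respect to the
  \<open>\<sigma>\<close>-algebra generated by \<open>Y\<close>.\<close>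
lemma cond_exp_given_integral_mult:
  fixes Z :: "'a \<Rightarrow> real" and Y :: "'a \<Rightarrow> 'b::euclidean_space"
  assumes "finite_measure M" and g: "cond_exp_given M Y Z g"
    and h: "h \<in> borel_measurable borel" and hZ: "integrable M (\<lambda>\<omega>. h (Y \<omega>) * Z \<omega>)"
  shows "(\<integral>\<omega>. h (Y \<omega>) * Z \<omega> \<partial>M) = (\<integral>\<omega>. h (Y \<omega>) * g (Y \<omega>) \<partial>M)"
proof -
  interpret finite_measure M by (rule assms(1))
  have Y: "Y \<in> borel_measurable M" and Z: "integrable M Z" and g_m: "g \<in> borel_measurable borel"
    using g unfolding cond_exp_given_def by auto
  define F where "F = vimage_algebra (space M) Y borel"
  have sets_F: "sets F = {Y -` A \<inter> space M | A. A \<in> sets borel}"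
    unfolding F_def by (rule sets_vimage_algebra2) (use Y in \<open>simp add: measurable_space\<close>)
  have "subalgebra M F"
    unfolding subalgebra_def sets_F using Y by (auto simp: F_def)
  then interpret S: finite_measure_subalgebra M F
    by unfold_locales
  have F_meas: "(\<lambda>\<omega>. f (Y \<omega>)) \<in> borel_measurable F" if "f \<in> borel_measurable borel" for f :: "'b \<Rightarrow> real"
    unfolding F_def using that by (intro measurable_compose[OF measurable_vimage_algebra1]) simp_all
  have "AE \<omega> in M. real_cond_exp M F Z \<omega> = g (Y \<omega>)"
  proof (rule S.real_cond_exp_charact[OF _ Z cond_exp_given_integrable_comp[OF g] F_meas])
    fix A assume "A \<in> sets F"
    then obtain B where "B \<in> sets borel" "A = Y -` B \<inter> space M"
      by (auto simp: sets_F)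
    then show "(LINT \<omega>:A|M. Z \<omega>) = (LINT \<omega>:A|M. g (Y \<omega>))"
      using cond_exp_given_set_integral[OF g] by simp
  qed (use g in \<open>simp add: cond_exp_given_def\<close>)
  moreover have "(\<integral>\<omega>. h (Y \<omega>) * Z \<omega> \<partial>M) = (\<integral>\<omega>. h (Y \<omega>) * real_cond_exp M F Z \<omega> \<partial>M)"
    using S.real_cond_exp_intg(2)[OF hZ F_meas[OF h]] Z by simp
  ultimately show ?thesis
    using Y h g_m by (auto intro!: integral_cong_AE measurable_compose[OF Y]
        borel_measurable_times borel_measurable_cond_exp2)
qed

lemma cond_exp_given_variance:
  fixes Z :: "'a \<Rightarrow> real" and Y :: "'a \<Rightarrow> 'b::euclidean_space"
  assumes "finite_measure M"
    and g: "cond_exp_given M Y Z g" and c: "cond_exp_given M Y (\<lambda>\<omega>. (Z \<omega>)\<^sup>2) c"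
    and gY2: "integrable M (\<lambda>\<omega>. (g (Y \<omega>))\<^sup>2)"
  shows "integrable M (\<lambda>\<omega>. (Z \<omega> - g (Y \<omega>))\<^sup>2)"
    and "(\<integral>\<omega>. (Z \<omega> - g (Y \<omega>))\<^sup>2 \<partial>M) = (\<integral>\<omega>. c (Y \<omega>) - (g (Y \<omega>))\<^sup>2 \<partial>M)"
proof -
  have [measurable]: "Y \<in> borel_measurable M" "g \<in> borel_measurable borel"
    and Z: "integrable M Z" and Z2: "integrable M (\<lambda>\<omega>. (Z \<omega>)\<^sup>2)"
    using g c unfolding cond_exp_given_def by auto
  have [measurable]: "Z \<in> borel_measurable M"
    using Z by (rule borel_measurable_integrable)
  have gYZ: "integrable M (\<lambda>\<omega>. g (Y \<omega>) * Z \<omega>)"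
    using gY2 Z2 by (intro integrable_mult_if_square_integrable) measurable
  have cross: "(\<integral>\<omega>. g (Y \<omega>) * Z \<omega> \<partial>M) = (\<integral>\<omega>. (g (Y \<omega>))\<^sup>2 \<partial>M)"
    using cond_exp_given_integral_mult[OF assms(1) g _ gYZ] by (simp add: power2_eq_square)
  have expand: "(Z \<omega> - g (Y \<omega>))\<^sup>2 = (Z \<omega>)\<^sup>2 - 2 * (g (Y \<omega>) * Z \<omega>) + (g (Y \<omega>))\<^sup>2" for \<omega>
    by (simp add: power2_diff mult.commute)
  show "integrable M (\<lambda>\<omega>. (Z \<omega> - g (Y \<omega>))\<^sup>2)"
    unfolding expand using Z2 gYZ gY2 by simp
  have "(\<integral>\<omega>. (Z \<omega> - g (Y \<omega>))\<^sup>2 \<partial>M)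
      = (\<integral>\<omega>. (Z \<omega>)\<^sup>2 \<partial>M) - 2 * (\<integral>\<omega>. g (Y \<omega>) * Z \<omega> \<partial>M) + (\<integral>\<omega>. (g (Y \<omega>))\<^sup>2 \<partial>M)"
    unfolding expand using Z2 gYZ gY2 by simp
  also have "\<dots> = (\<integral>\<omega>. c (Y \<omega>) - (g (Y \<omega>))\<^sup>2 \<partial>M)"
    using cond_exp_given_integral[OF c] cond_exp_given_integrable_comp[OF c] gY2 cross by simp
  finally show "(\<integral>\<omega>. (Z \<omega> - g (Y \<omega>))\<^sup>2 \<partial>M) = (\<integral>\<omega>. c (Y \<omega>) - (g (Y \<omega>))\<^sup>2 \<partial>M)" .
qed

section \<open>Necessity\<close>

lemma square_integrable_vec_nth:
  fixes A :: "'a \<Rightarrow> 'b::euclidean_space^'n"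
  assumes "integrable M (\<lambda>\<omega>. (norm (A \<omega>))\<^sup>2)" and [measurable]: "A \<in> borel_measurable M"
  shows "integrable M (\<lambda>\<omega>. (norm (A \<omega> $ i))\<^sup>2)"
  by (rule Bochner_Integration.integrable_bound[OF assms(1)])
    (auto intro!: AE_I2 power_mono Finite_Cartesian_Product.norm_nth_le)

lemma integral_comp_eq_0_if_weak_div_zero:
  fixes X :: "'a \<Rightarrow> real^'n" and Pi :: "real^'n \<Rightarrow> real^'n^'n"
  assumes law: "distr M lborel X = density lborel (\<lambda>x. ennreal (\<rho> x))"
    and [measurable]: "X \<in> borel_measurable M" "\<rho> \<in> borel_measurable borel" "Pi \<in> borel_measurable borel"
    and \<rho>: "\<And>x. 0 \<le> \<rho> x"
    and int: "\<And>i j. integrable M (\<lambda>\<omega>. Pi (X \<omega>) $ i $ j)"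
    and div: "weak_div_zero (\<lambda>x. \<rho> x *\<^sub>R Pi x)"
  shows "(\<integral>\<omega>. Pi (X \<omega>) $ k $ j \<partial>M) = 0"
proof -
  have X: "X \<in> measurable M lborel" by simp
  have "integrable (density lborel (\<lambda>x. ennreal (\<rho> x))) (\<lambda>x. Pi x $ i $ j)" for i j
    using int[of i j] unfolding law[symmetric] by (simp add: integrable_distr_eq[OF X])
  then have "integrable lborel (\<lambda>x. (\<rho> x *\<^sub>R Pi x) $ i $ j)" for i j
    using \<rho> by (simp add: integrable_density)
  then have "(\<integral>x. (\<rho> x *\<^sub>R Pi x) $ k $ j \<partial>lborel) = 0"
    by (rule integral_weak_div_zero_eq_0[OF div])
  moreover have "(\<integral>\<omega>. Pi (X \<omega>) $ k $ j \<partial>M) = (\<integral>x. Pi x $ k $ j \<partial>distr M lborel X)"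
    by (simp add: integral_distr[OF X])
  ultimately show ?thesis
    unfolding law using \<rho> by (simp add: integral_density)
qed

lemma graph_coupling_if_AE_snd_eq:
  fixes T :: "real^'n \<Rightarrow> real^'n"
  assumes \<gamma>: "coupling P0 P1 \<gamma>" and T: "T \<in> borel_measurable borel"
    and ae: "AE p in \<gamma>. snd p = T (fst p)"
  shows "distr P0 borel T = P1" and "distr P0 borel (\<lambda>x. (x, T x)) = \<gamma>"
proof -
  have sets: "sets \<gamma> = sets borel" and P0: "distr \<gamma> borel fst = P0" and P1: "distr \<gamma> borel snd = P1"
    using \<gamma> unfolding coupling_def by auto
  have meas: "measurable \<gamma> N = measurable borel N" for N :: "'z measure"
    using measurable_cong_sets[OF sets refl] .
  have fst_borel: "(fst :: (real^'n) \<times> (real^'n) \<Rightarrow> _) \<in> borel_measurable borel"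
    and snd_borel: "(snd :: (real^'n) \<times> (real^'n) \<Rightarrow> _) \<in> borel_measurable borel"
    by (intro borel_measurable_continuous_onI continuous_on_fst continuous_on_snd continuous_on_id)+
  have graph: "(\<lambda>x. (x, T x)) \<in> borel_measurable borel"
    using T by (simp add: borel_prod[symmetric])
  have "distr P0 borel T = distr \<gamma> borel (T \<circ> fst)"
    unfolding P0[symmetric] using T fst_borel by (intro distr_distr) (simp_all add: meas)
  also have "\<dots> = distr \<gamma> borel snd"
    using ae T fst_borel snd_borel by (intro distr_cong_AE) (auto simp: meas)
  finally show "distr P0 borel T = P1"
    using P1 by simp
  have "distr P0 borel (\<lambda>x. (x, T x)) = distr \<gamma> borel ((\<lambda>x. (x, T x)) \<circ> fst)"
    unfolding P0[symmetric] using graph fst_borel by (intro distr_distr) (simp_all add: meas)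
  also have "\<dots> = distr \<gamma> borel (\<lambda>p. p)"
    using ae graph fst_borel by (intro distr_cong_AE) (auto simp: meas prod_eq_iff)
  also have "\<dots> = \<gamma>"
    by (rule distr_id2) (simp add: sets)
  finally show "distr P0 borel (\<lambda>x. (x, T x)) = \<gamma>" .
qed

lemma AE_eq_cond_exp_if_zero_mean_covariance:
  fixes Z :: "'a \<Rightarrow> real^'n" and Y :: "'a \<Rightarrow> 'b::euclidean_space"
  assumes "finite_measure M"
    and v: "cond_exp_given M Y Z v" and C: "cond_exp_given M Y (\<lambda>\<omega>. outer (Z \<omega>) (Z \<omega>)) C"
    and int: "\<And>k. integrable M (\<lambda>\<omega>. (C (Y \<omega>) - outer (v (Y \<omega>)) (v (Y \<omega>))) $ k $ k)"
    and mean: "\<And>k. (\<integral>\<omega>. (C (Y \<omega>) - outer (v (Y \<omega>)) (v (Y \<omega>))) $ k $ k \<partial>M) = 0"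
  shows "AE \<omega> in M. Z \<omega> = v (Y \<omega>)"
proof -
  have "AE \<omega> in M. Z \<omega> $ k = v (Y \<omega>) $ k" for k
  proof -
    have vk: "cond_exp_given M Y (\<lambda>\<omega>. Z \<omega> $ k) (\<lambda>y. v y $ k)"
      using cond_exp_given_bounded_linear[OF v bounded_linear_vec_nth] .
    have "cond_exp_given M Y (\<lambda>\<omega>. outer (Z \<omega>) (Z \<omega>) $ k $ k) (\<lambda>y. C y $ k $ k)"
      using cond_exp_given_bounded_linear[OF C
          bounded_linear_compose[OF bounded_linear_vec_nth bounded_linear_vec_nth]] .
    then have Ck: "cond_exp_given M Y (\<lambda>\<omega>. (Z \<omega> $ k)\<^sup>2) (\<lambda>y. C y $ k $ k)"
      by (simp add: outer_def power2_eq_square)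
    have diag: "(C y - outer (v y) (v y)) $ k $ k = C y $ k $ k - (v y $ k)\<^sup>2" for y
      by (simp add: outer_def power2_eq_square)
    have "integrable M (\<lambda>\<omega>. C (Y \<omega>) $ k $ k - (C (Y \<omega>) $ k $ k - (v (Y \<omega>) $ k)\<^sup>2))"
      using cond_exp_given_integrable_comp[OF Ck] int[of k] unfolding diag
      by (rule Bochner_Integration.integrable_diff)
    then have "integrable M (\<lambda>\<omega>. (v (Y \<omega>) $ k)\<^sup>2)"
      by simp
    note variance = cond_exp_given_variance[OF assms(1) vk Ck this]
    have "(\<integral>\<omega>. (Z \<omega> $ k - v (Y \<omega>) $ k)\<^sup>2 \<partial>M) = 0"
      using mean[of k] unfolding variance(2) diag .
    then have "AE \<omega> in M. (Z \<omega> $ k - v (Y \<omega>) $ k)\<^sup>2 = 0"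
      using integral_nonneg_eq_0_iff_AE[OF variance(1)] by simp
    then show ?thesis
      by simp
  qed
  then have "AE \<omega> in M. \<forall>k\<in>UNIV. Z \<omega> $ k = v (Y \<omega>) $ k"
    by (intro AE_finite_allI) simp_all
  then show ?thesis
    by eventually_elim (simp add: vec_eq_iff)
qed

lemma graph_coupling_if_reynolds_div_zero:
  fixes \<gamma> :: "((real^'n) \<times> (real^'n)) measure"
  assumes \<gamma>: "coupling P0 P1 \<gamma>"
    and \<rho>_m: "\<rho> 0 \<in> borel_measurable borel" and \<rho>_nn: "\<forall>x. 0 \<le> \<rho> 0 x"
    and law: "distr \<gamma> lborel (interp 0) = density lborel (\<lambda>x. ennreal (\<rho> 0 x))"
    and v: "cond_exp_given \<gamma> (interp 0) vel (v 0)"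
    and C: "cond_exp_given \<gamma> (interp 0) (\<lambda>p. outer (vel p) (vel p)) (C 0)"
    and mom: "integrable \<gamma> (\<lambda>p. (norm (reynolds C v 0 (interp 0 p)))\<^sup>2)"
    and div: "weak_div_zero (\<lambda>x. \<rho> 0 x *\<^sub>R reynolds C v 0 x)"
  shows "\<exists>T. T \<in> borel_measurable borel \<and> distr P0 borel T = P1 \<and> distr P0 borel (\<lambda>x. (x, T x)) = \<gamma>"
proof -
  interpret prob_space \<gamma>
    using \<gamma> unfolding coupling_def by simp
  have interp_0: "interp 0 = fst"
    by (simp add: fun_eq_iff interp_def)
  have [measurable]: "fst \<in> borel_measurable \<gamma>" "v 0 \<in> borel_measurable borel" "C 0 \<in> borel_measurable borel"
    using v C unfolding cond_exp_given_def interp_0 by auto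
  have [measurable]: "reynolds C v 0 \<in> borel_measurable borel"
    unfolding reynolds_def by measurable
  have Pi_int: "integrable \<gamma> (\<lambda>p. reynolds C v 0 (fst p) $ i $ j)" for i j
  proof (rule square_integrable_imp_integrable)
    show "integrable \<gamma> (\<lambda>p. (reynolds C v 0 (fst p) $ i $ j)\<^sup>2)"
      using square_integrable_vec_nth[OF square_integrable_vec_nth[OF mom[unfolded interp_0]], of i j]
      by simp
  qed measurable
  have "AE p in \<gamma>. vel p = v 0 (fst p)"
  proof (rule AE_eq_cond_exp_if_zero_mean_covariance[OF finite_measure_axioms,
        where Y = fst and v = "v 0" and C = "C 0"])
    show "cond_exp_given \<gamma> fst vel (v 0)"
      using v unfolding interp_0 .
    show "cond_exp_given \<gamma> fst (\<lambda>p. outer (vel p) (vel p)) (C 0)"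
      using C unfolding interp_0 .
    show "integrable \<gamma> (\<lambda>p. (C 0 (fst p) - outer (v 0 (fst p)) (v 0 (fst p))) $ k $ k)" for k
      using Pi_int by (simp add: reynolds_def)
    show "(\<integral>p. (C 0 (fst p) - outer (v 0 (fst p)) (v 0 (fst p))) $ k $ k \<partial>\<gamma>) = 0" for k
      using law \<rho>_nn Pi_int div unfolding interp_0 reynolds_def[symmetric]
      by (intro integral_comp_eq_0_if_weak_div_zero) (auto simp: \<rho>_m)
  qed
  then have "AE p in \<gamma>. snd p = fst p + v 0 (fst p)"
    by eventually_elim (auto simp: vel_def algebra_simps)
  moreover have "(\<lambda>x. x + v 0 x) \<in> borel_measurable borel"
    by measurable
  ultimately show ?thesis
    using graph_coupling_if_AE_snd_eq[OF \<gamma>] by blast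
qed

section \<open>Sufficiency\<close>

lemma interp_graph_expanding:
  fixes T :: "real^'n \<Rightarrow> real^'n"
  assumes mono: "0 \<le> (T x - T y) \<bullet> (x - y)" and "0 \<le> t"
  shows "(1 - t) * norm (x - y) \<le> norm (interp t (x, T x) - interp t (y, T y))"
proof (cases "x = y")
  case False
  have "(interp t (x, T x) - interp t (y, T y)) \<bullet> (x - y)
      = (1 - t) * (norm (x - y))\<^sup>2 + t * ((T x - T y) \<bullet> (x - y))"
    by (simp add: interp_def algebra_simps inner_diff_left inner_add_left power2_norm_eq_inner)
  then have "(1 - t) * (norm (x - y))\<^sup>2 \<le> (interp t (x, T x) - interp t (y, T y)) \<bullet> (x - y)"
    using mult_nonneg_nonneg[OF \<open>0 \<le> t\<close> mono] by linarith
  also have "\<dots> \<le> norm (interp t (x, T x) - interp t (y, T y)) * norm (x - y)"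
    by (rule norm_cauchy_schwarz)
  finally show ?thesis
    using False by (simp add: power2_eq_square)
qed simp

lemma closed_image_if_expanding:
  fixes f :: "'a::complete_space \<Rightarrow> 'b::metric_space"
  assumes S: "closed S" and f: "continuous_on S f" and "c > 0"
    and expand: "\<And>x y. x \<in> S \<Longrightarrow> y \<in> S \<Longrightarrow> c * dist x y \<le> dist (f x) (f y)"
  shows "closed (f ` S)"
  unfolding closed_sequential_limits
proof (intro allI impI, elim conjE)
  fix s l assume "\<forall>n. s n \<in> f ` S" and sl: "s \<longlonglongrightarrow> l"
  then have "\<forall>n. \<exists>y. y \<in> S \<and> f y = s n"
    by (metis imageE)
  then obtain x where xS: "\<And>n. x n \<in> S" and fx: "\<And>n. f (x n) = s n"
    by (auto dest!: choice)
  have "Cauchy x"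
  proof (rule metric_CauchyI)
    fix e :: real assume "e > 0"
    then obtain M where M: "\<And>m n. M \<le> m \<Longrightarrow> M \<le> n \<Longrightarrow> dist (s m) (s n) < c * e"
      using metric_CauchyD[OF LIMSEQ_imp_Cauchy[OF sl], of "c * e"] \<open>c > 0\<close> by auto
    have "dist (x m) (x n) < e" if "M \<le> m" "M \<le> n" for m n
    proof -
      have "c * dist (x m) (x n) < c * e"
        using expand[OF xS xS, of m n] M[OF that] fx by simp
      then show ?thesis
        using \<open>c > 0\<close> by simp
    qed
    then show "\<exists>M. \<forall>m\<ge>M. \<forall>n\<ge>M. dist (x m) (x n) < e"
      by blast
  qed
  then obtain y where xy: "x \<longlonglongrightarrow> y"
    using convergent_eq_Cauchy by blast
  have "y \<in> S"
    using closed_sequentially[OF S] xS xy by blast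
  moreover have "s \<longlonglongrightarrow> f y"
    using continuous_on_tendsto_compose[OF f xy \<open>y \<in> S\<close>] xS fx by simp
  ultimately show "l \<in> f ` S"
    using LIMSEQ_unique[OF sl] by blast
qed

lemma inj_on_if_expanding:
  fixes f :: "'a::metric_space \<Rightarrow> 'b::metric_space"
  assumes "c > 0" and expand: "\<And>x y. x \<in> S \<Longrightarrow> y \<in> S \<Longrightarrow> c * dist x y \<le> dist (f x) (f y)"
  shows "inj_on f S"
proof (rule inj_onI)
  fix x y assume "x \<in> S" "y \<in> S" "f x = f y"
  then have "c * dist x y \<le> 0"
    using expand[of x y] by simp
  then show "x = y"
    using \<open>c > 0\<close> by (simp add: mult_le_0_iff)
qed

lemma lipschitz_on_inv_into_if_expanding:
  fixes f :: "'a::metric_space \<Rightarrow> 'b::metric_space"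
  assumes "c > 0" and expand: "\<And>x y. x \<in> S \<Longrightarrow> y \<in> S \<Longrightarrow> c * dist x y \<le> dist (f x) (f y)"
  shows "(1 / c)-lipschitz_on (f ` S) (inv_into S f)"
proof (rule lipschitz_onI)
  fix u v assume "u \<in> f ` S" "v \<in> f ` S"
  then obtain x y where xy: "x \<in> S" "y \<in> S" and "u = f x" "v = f y"
    by blast
  then have "dist (inv_into S f u) (inv_into S f v) = dist x y"
    using inj_on_if_expanding[OF assms] by simp
  also have "\<dots> \<le> 1 / c * dist u v"
    using expand[OF xy] \<open>c > 0\<close> \<open>u = f x\<close> \<open>v = f y\<close> by (simp add: field_simps)
  finally show "dist (inv_into S f u) (inv_into S f v) \<le> 1 / c * dist u v" .
qed (use \<open>c > 0\<close> in simp)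

lemma vel_AE_eq_comp_interp_if_monotone:
  fixes T :: "real^'n \<Rightarrow> real^'n"
  assumes P0: "sets P0 = sets borel" and \<gamma>: "distr P0 borel (\<lambda>x. (x, T x)) = \<gamma>"
    and T: "continuous_on UNIV T" and S: "closed S" "AE x in P0. x \<in> S"
    and mono: "\<And>x y. x \<in> S \<Longrightarrow> y \<in> S \<Longrightarrow> 0 \<le> (T x - T y) \<bullet> (x - y)"
    and t: "0 \<le> t" "t < 1"
  obtains h where "h \<in> borel_measurable borel" "AE p in \<gamma>. vel p = h (interp t p)"
proof -
  define F where "F x = interp t (x, T x)" for x
  have expand: "(1 - t) * dist x y \<le> dist (F x) (F y)" if "x \<in> S" "y \<in> S" for x y
    using interp_graph_expanding[OF mono[OF that] t(1)] by (simp add: F_def dist_norm)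
  have "continuous_on UNIV F"
    unfolding F_def interp_def by (intro continuous_intros T)
  then have closed_FS: "closed (F ` S)"
    using t by (intro closed_image_if_expanding[OF S(1) _ _ expand]) (auto intro: continuous_on_subset)
  have "continuous_on (F ` S) (inv_into S F)"
    by (rule lipschitz_on_continuous_on[OF lipschitz_on_inv_into_if_expanding[OF _ expand]])
      (use t in auto)
  then have cont_h: "continuous_on (F ` S) (\<lambda>y. T (inv_into S F y) - inv_into S F y)"
    by (intro continuous_intros continuous_on_compose2[OF T]) auto
  define h where "h y = indicator (F ` S) y *\<^sub>R (T (inv_into S F y) - inv_into S F y)" for y
  have h: "h \<in> borel_measurable borel"
    unfolding h_def using closed_FS cont_h
    by (intro borel_measurable_continuous_on_indicator) auto
  have [measurable]: "vel \<in> borel_measurable borel" "interp t \<in> borel_measurable borel"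
    unfolding vel_def interp_def by (intro borel_measurable_continuous_onI continuous_intros)+
  have "{p \<in> space borel. vel p = h (interp t p)} \<in> sets borel"
    using h by measurable
  moreover have "(\<lambda>x. (x, T x)) \<in> measurable P0 borel"
    unfolding measurable_cong_sets[OF P0 refl] using T
    by (intro borel_measurable_continuous_onI continuous_intros)
  moreover have "inj_on F S"
    using t by (intro inj_on_if_expanding[OF _ expand]) auto
  with S(2) have "AE x in P0. vel (x, T x) = h (interp t (x, T x))"
    by (auto elim!: AE_mp simp: h_def F_def[symmetric] vel_def)
  ultimately have "AE p in \<gamma>. vel p = h (interp t p)"
    unfolding \<gamma>[symmetric] by (simp add: AE_distr_iff)
  with h that show ?thesis
    by blast
qed

lemma reynolds_AE_eq_0_if_comp:
  fixes Z :: "'a \<Rightarrow> real^'n"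
  assumes v: "cond_exp_given M Y Z v" and C: "cond_exp_given M Y (\<lambda>\<omega>. outer (Z \<omega>) (Z \<omega>)) C"
    and [measurable]: "h \<in> borel_measurable borel" and ae: "AE \<omega> in M. Z \<omega> = h (Y \<omega>)"
  shows "AE y in distr M borel Y. C y - outer (v y) (v y) = 0"
proof -
  have [measurable]: "Y \<in> borel_measurable M" and Z: "integrable M Z"
    and ZZ: "integrable M (\<lambda>\<omega>. outer (Z \<omega>) (Z \<omega>))"
    using v C unfolding cond_exp_given_def by auto
  have "cond_exp_given M Y Z h"
    using Z ae by (intro cond_exp_given_comp) auto
  then have "AE y in distr M borel Y. v y = h y"
    by (rule cond_exp_given_unique[OF v])
  moreover have "cond_exp_given M Y (\<lambda>\<omega>. outer (Z \<omega>) (Z \<omega>)) (\<lambda>y. outer (h y) (h y))"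
    using ZZ ae by (intro cond_exp_given_comp) (auto elim!: AE_mp)
  then have "AE y in distr M borel Y. C y = outer (h y) (h y)"
    by (rule cond_exp_given_unique[OF C])
  ultimately show ?thesis
    by eventually_elim simp
qed

lemma weak_div_zero_if_AE_eq_0:
  fixes V :: "real^'n \<Rightarrow> real^'n^'n"
  assumes [measurable]: "V \<in> borel_measurable borel" and ae: "AE x in lborel. V x = 0"
  shows "weak_div_zero V"
  unfolding weak_div_zero_def
proof (intro allI impI conjI)
  fix \<psi> :: "real^'n \<Rightarrow> real" and j
  assume "test_fun \<psi>"
  then have "continuous_on UNIV (partial i \<psi>)" for i
    unfolding test_fun_def by (metis Ck.simps)
  then have [measurable]: "partial i \<psi> \<in> borel_measurable borel" for i
    by (rule borel_measurable_continuous_onI)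
  have ae0: "AE x in lborel. (\<Sum>i\<in>UNIV. partial i \<psi> x * V x $ i $ j) = 0"
    using ae by eventually_elim simp
  then show "integrable lborel (\<lambda>x. \<Sum>i\<in>UNIV. partial i \<psi> x * V x $ i $ j)"
    by (intro integrable_cong_AE_imp[OF integrable_zero]) (auto elim!: AE_mp)
  show "(\<integral>x. (\<Sum>i\<in>UNIV. partial i \<psi> x * V x $ i $ j) \<partial>lborel) = 0"
    using ae0 by (rule integral_eq_zero_AE)
qed

lemma reynolds_div_zero_if_monotone_graph:
  fixes T :: "real^'n \<Rightarrow> real^'n"
  assumes P0: "sets P0 = sets borel" and \<gamma>: "distr P0 borel (\<lambda>x. (x, T x)) = \<gamma>"
    and T: "continuous_on UNIV T" and S: "closed S" "AE x in P0. x \<in> S"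
    and mono: "\<And>x y. x \<in> S \<Longrightarrow> y \<in> S \<Longrightarrow> 0 \<le> (T x - T y) \<bullet> (x - y)"
    and t: "0 \<le> t" "t < 1"
    and \<rho>_m: "\<rho> t \<in> borel_measurable borel" and \<rho>_nn: "\<forall>x. 0 \<le> \<rho> t x"
    and law: "distr \<gamma> lborel (interp t) = density lborel (\<lambda>x. ennreal (\<rho> t x))"
    and v: "cond_exp_given \<gamma> (interp t) vel (v t)"
    and C: "cond_exp_given \<gamma> (interp t) (\<lambda>p. outer (vel p) (vel p)) (C t)"
  shows "weak_div_zero (\<lambda>x. \<rho> t x *\<^sub>R reynolds C v t x)"
proof (rule weak_div_zero_if_AE_eq_0)
  obtain h where "h \<in> borel_measurable borel" "AE p in \<gamma>. vel p = h (interp t p)"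
    using vel_AE_eq_comp_interp_if_monotone[OF P0 \<gamma> T S mono t] .
  then have "AE x in distr \<gamma> borel (interp t). reynolds C v t x = 0"
    unfolding reynolds_def by (rule reynolds_AE_eq_0_if_comp[OF v C])
  moreover have "distr \<gamma> borel (interp t) = density lborel (\<lambda>x. ennreal (\<rho> t x))"
    unfolding law[symmetric] by (rule distr_cong) simp_all
  ultimately have "AE x in density lborel (\<lambda>x. ennreal (\<rho> t x)). reynolds C v t x = 0"
    by (simp only:)
  then have "AE x in lborel. 0 < \<rho> t x \<longrightarrow> reynolds C v t x = 0"
    using \<rho>_m by (subst (asm) AE_density) auto
  then show "AE x in lborel. \<rho> t x *\<^sub>R reynolds C v t x = 0"
    by eventually_elim (use \<rho>_nn in \<open>auto simp: less_le\<close>)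
  have [measurable]: "v t \<in> borel_measurable borel" "C t \<in> borel_measurable borel"
    using v C unfolding cond_exp_given_def by auto
  show "(\<lambda>x. \<rho> t x *\<^sub>R reynolds C v t x) \<in> borel_measurable borel"
    unfolding reynolds_def using \<rho>_m by measurable
qed

section \<open>Monotone transport maps\<close>

lemma monotone_if_jacobian_psd:
  fixes T :: "real^'n \<Rightarrow> real^'n"
  assumes psd: "\<forall>x. T differentiable (at x) \<and> (\<forall>h. 0 \<le> h \<bullet> (jacobian T (at x) *v h))"
  shows "0 \<le> (T x - T y) \<bullet> (x - y)"
proof -
  define d where "d = x - y"
  define g where "g s = T (y + s *\<^sub>R d) \<bullet> d" for s :: real
  have g': "(g has_real_derivative (jacobian T (at (y + s *\<^sub>R d)) *v d) \<bullet> d) (at s)" for s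
  proof -
    let ?D = "\<lambda>h. jacobian T (at (y + s *\<^sub>R d)) *v h"
    have "(T has_derivative ?D) (at (y + s *\<^sub>R d))"
      using psd jacobian_works by blast
    then have "((\<lambda>s. T (y + s *\<^sub>R d)) has_derivative (\<lambda>r. ?D (r *\<^sub>R d))) (at s)"
      by (rule has_derivative_compose[of "\<lambda>s. y + s *\<^sub>R d", unfolded o_def, rotated])
        (auto intro!: derivative_eq_intros)
    then have "(g has_derivative (\<lambda>r. ?D (r *\<^sub>R d) \<bullet> d)) (at s)"
      unfolding g_def by (rule has_derivative_inner_left)
    moreover have "(\<lambda>r. ?D (r *\<^sub>R d) \<bullet> d) = (*) (?D d \<bullet> d)"
      by (simp add: fun_eq_iff matrix_vector_mult_scaleR mult.commute)
    ultimately show ?thesis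
      unfolding has_field_derivative_def by simp
  qed
  have "g 0 \<le> g 1"
  proof (rule DERIV_nonneg_imp_increasing_open[of 0 1 g])
    show "\<exists>y. (g has_real_derivative y) (at s) \<and> 0 \<le> y" for s
      using g' psd by (metis inner_commute)
    show "continuous_on {0..1} g"
      using g' by (meson DERIV_isCont continuous_at_imp_continuous_on)
  qed simp
  then show ?thesis
    unfolding g_def d_def by (simp add: inner_diff_left)
qed

definition measure_support :: "'a::topological_space measure \<Rightarrow> 'a set" where
  "measure_support P = {x. \<forall>U. open U \<longrightarrow> x \<in> U \<longrightarrow> emeasure P U \<noteq> 0}"

lemma closed_measure_support: "closed (measure_support P)"
proof -
  have "- measure_support P = \<Union>{U. open U \<and> emeasure P U = 0}"
    unfolding measure_support_def by blast
  then show ?thesis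
    unfolding closed_def by auto
qed

lemma AE_in_measure_support:
  fixes P :: "'a::second_countable_topology measure"
  assumes "sets P = sets borel"
  shows "AE x in P. x \<in> measure_support P"
proof -
  define \<F> where "\<F> = {U. open U \<and> emeasure P U = 0}"
  obtain \<F>' where \<F>': "\<F>' \<subseteq> \<F>" "countable \<F>'" "\<Union>\<F>' = \<Union>\<F>"
    using Lindelof[of \<F>] unfolding \<F>_def by blast
  have "(\<Union>U\<in>\<F>'. U) \<in> null_sets P"
    using \<F>' assms by (intro null_sets_UN') (auto simp: \<F>_def null_sets_def)
  moreover have "- measure_support P = \<Union>\<F>'"
    unfolding \<F>'(3) \<F>_def measure_support_def by blast
  ultimately show ?thesis
    by (intro AE_I') auto
qed

lemma measure_support_open_nonnull:
  "x \<in> measure_support P \<Longrightarrow> open U \<Longrightarrow> x \<in> U \<Longrightarrow> emeasure P U \<noteq> 0"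
  unfolding measure_support_def by blast

lemma inner_diff_neg_near:
  fixes T :: "'a::real_inner \<Rightarrow> 'a"
  assumes T: "continuous_on UNIV T" and neg: "(x - y) \<bullet> (T x - T y) < 0"
  obtains A B where "open A" "open B" "x \<in> A" "y \<in> B" "A \<inter> B = {}"
    "\<And>a b. a \<in> A \<Longrightarrow> b \<in> B \<Longrightarrow> (a - b) \<bullet> (T a - T b) < 0"
proof -
  define D where "D p = (fst p - snd p) \<bullet> (T (fst p) - T (snd p))" for p
  have "continuous_on UNIV D"
    unfolding D_def by (intro continuous_intros continuous_on_compose2[OF T]) auto
  then have "open (D -` {..<0})"
    using open_vimage[of "{..<0}" D] by simp
  then obtain A B where AB: "open A" "open B" "(x, y) \<in> A \<times> B" "A \<times> B \<subseteq> D -` {..<0}"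
    using neg by (elim open_prod_elim) (auto simp: D_def)
  obtain U V where UV: "open U" "open V" "x \<in> U" "y \<in> V" "U \<inter> V = {}"
    using neg separation_t2[of x y] by auto
  show ?thesis
  proof (rule that[of "A \<inter> U" "B \<inter> V"])
    show "(a - b) \<bullet> (T a - T b) < 0" if "a \<in> A \<inter> U" "b \<in> B \<inter> V" for a b
      using AB(4) that by (auto simp: D_def)
  qed (use AB UV in auto)
qed

definition swap_target :: "('a \<times> 'a) set \<Rightarrow> ('a \<Rightarrow> 'b) \<Rightarrow> 'a \<times> 'a \<Rightarrow> 'a \<times> 'b" where
  "swap_target W T p = (fst p, T (if p \<in> W then snd p else fst p))"

lemma sets_pair_borel:
  fixes P :: "'a::second_countable_topology measure"
  assumes "sets P = sets borel"
  shows "sets (P \<Otimes>\<^sub>M P) = sets (borel :: ('a \<times> 'a) measure)"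
  using sets_pair_measure_cong[OF assms assms] unfolding borel_prod .

lemma borel_measurable_swap_target:
  fixes T :: "real^'n \<Rightarrow> real^'n"
  assumes T: "T \<in> borel_measurable borel" and W: "W \<in> sets borel"
  shows "snd \<circ> swap_target W T \<in> borel_measurable borel"
    and "swap_target W T \<in> borel_measurable borel"
proof -
  have fst_m: "(fst :: (real^'n) \<times> (real^'n) \<Rightarrow> _) \<in> borel_measurable borel"
    and snd_m: "(snd :: (real^'n) \<times> (real^'n) \<Rightarrow> _) \<in> borel_measurable borel"
    by (intro borel_measurable_continuous_onI continuous_intros)+
  have "snd \<circ> swap_target W T = (\<lambda>p. if p \<in> W then (T \<circ> snd) p else (T \<circ> fst) p)"
    by (auto simp: swap_target_def fun_eq_iff)
  then show target_m: "snd \<circ> swap_target W T \<in> borel_measurable borel"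
    using W measurable_comp[OF fst_m T] measurable_comp[OF snd_m T] by (simp add: measurable_If_set)
  have "(\<lambda>p. (fst p, (snd \<circ> swap_target W T) p)) \<in> measurable borel (borel \<Otimes>\<^sub>M borel)"
    using fst_m target_m by (intro measurable_Pair) (simp_all add: o_def)
  then show "swap_target W T \<in> borel_measurable borel"
    by (simp add: borel_prod swap_target_def[abs_def] o_def)
qed

text \<open>Since \<open>P \<Otimes> P\<close> is invariant under \<open>(a, b) \<mapsto> (b, a)\<close> and \<open>W\<close> is symmetric, redirecting
  the targets on \<open>W\<close> does not change the law of the target.\<close>
lemma distr_target_swap_target:
  fixes P :: "(real^'n) measure" and T :: "real^'n \<Rightarrow> real^'n"
  assumes P: "prob_space P" "sets P = sets borel" and T: "T \<in> borel_measurable borel"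
    and W: "W \<in> sets borel" and sym: "\<And>a b. (a, b) \<in> W \<longleftrightarrow> (b, a) \<in> W"
  shows "distr (P \<Otimes>\<^sub>M P) borel (snd \<circ> swap_target W T) = distr (P \<Otimes>\<^sub>M P) borel (T \<circ> fst)"
proof (rule measure_eqI)
  interpret PP: pair_prob_space P P
    using P(1) by (simp add: pair_prob_space_def pair_sigma_finite_def prob_space_imp_sigma_finite)
  let ?\<mu> = "P \<Otimes>\<^sub>M P"
  have meas: "measurable ?\<mu> N = measurable borel N" for N :: "'z measure"
    by (rule measurable_cong_sets[OF sets_pair_borel[OF P(2)] refl])
  have space: "space ?\<mu> = UNIV"
    using sets_eq_imp_space_eq[OF sets_pair_borel[OF P(2)]] by simp
  have fst_m: "(fst :: (real^'n) \<times> (real^'n) \<Rightarrow> _) \<in> borel_measurable borel"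
    and snd_m: "(snd :: (real^'n) \<times> (real^'n) \<Rightarrow> _) \<in> borel_measurable borel"
    by (intro borel_measurable_continuous_onI continuous_intros)+
  note Tfst = measurable_comp[OF fst_m T] and Tsnd = measurable_comp[OF snd_m T]
  fix E assume "E \<in> sets (distr ?\<mu> borel (snd \<circ> swap_target W T))"
  then have E: "E \<in> sets borel" by simp
  define X1 where "X1 = W \<inter> (T \<circ> snd) -` E"
  define X2 where "X2 = W \<inter> (T \<circ> fst) -` E"
  define Y where "Y = - W \<inter> (T \<circ> fst) -` E"
  have sets: "X1 \<in> sets ?\<mu>" "X2 \<in> sets ?\<mu>" "Y \<in> sets ?\<mu>"
    unfolding X1_def X2_def Y_def sets_pair_borel[OF P(2)]
    using measurable_sets[OF Tsnd E] measurable_sets[OF Tfst E] W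
    by (auto simp: Compl_eq_Diff_UNIV Int_Diff[symmetric] intro: sets.Int sets.Diff)
  have "emeasure ?\<mu> X1 = emeasure (distr ?\<mu> ?\<mu> (\<lambda>(a, b). (b, a))) X1"
    by (simp add: PP.distr_pair_swap[symmetric])
  also have "\<dots> = emeasure ?\<mu> X2"
  proof -
    have "(\<lambda>(a, b). (b, a)) -` X1 \<inter> space ?\<mu> = X2"
      unfolding X1_def X2_def space using sym by auto
    then show ?thesis
      using sets(1) by (subst emeasure_distr) (auto simp: measurable_pair_swap')
  qed
  finally have X12: "emeasure ?\<mu> X1 = emeasure ?\<mu> X2" .
  have "(snd \<circ> swap_target W T) -` E \<inter> space ?\<mu> = X1 \<union> Y"
    unfolding X1_def Y_def space swap_target_def by (auto split: if_splits)
  then have "emeasure (distr ?\<mu> borel (snd \<circ> swap_target W T)) E = emeasure ?\<mu> (X1 \<union> Y)"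
    using borel_measurable_swap_target(1)[OF T W] E by (subst emeasure_distr) (simp_all add: meas)
  also have "\<dots> = emeasure ?\<mu> X2 + emeasure ?\<mu> Y"
    using sets X12 by (subst plus_emeasure[symmetric]) (auto simp: X1_def Y_def)
  also have "\<dots> = emeasure ?\<mu> (X2 \<union> Y)"
    using sets by (intro plus_emeasure) (auto simp: X2_def Y_def)
  also have "\<dots> = emeasure (distr ?\<mu> borel (T \<circ> fst)) E"
  proof -
    have "(T \<circ> fst) -` E \<inter> space ?\<mu> = X2 \<union> Y"
      unfolding X2_def Y_def space by auto
    then show ?thesis
      using Tfst E by (subst emeasure_distr) (simp_all add: meas)
  qed
  finally show "emeasure (distr ?\<mu> borel (snd \<circ> swap_target W T)) E
      = emeasure (distr ?\<mu> borel (T \<circ> fst)) E" .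
qed simp

lemma coupling_swap_target:
  fixes P :: "(real^'n) measure" and T :: "real^'n \<Rightarrow> real^'n"
  assumes P: "prob_space P" "sets P = sets borel" and T: "T \<in> borel_measurable borel"
    and W: "W \<in> sets borel" and sym: "\<And>a b. (a, b) \<in> W \<longleftrightarrow> (b, a) \<in> W"
  shows "coupling P (distr P borel T) (distr (P \<Otimes>\<^sub>M P) borel (swap_target W T))"
  unfolding coupling_def
proof (intro conjI)
  interpret P: prob_space P by (rule P(1))
  interpret PP: pair_prob_space P P ..
  let ?\<mu> = "P \<Otimes>\<^sub>M P"
  have meas: "measurable ?\<mu> N = measurable borel N" for N :: "'z measure"
    by (rule measurable_cong_sets[OF sets_pair_borel[OF P(2)] refl])
  have fst_m: "(fst :: (real^'n) \<times> (real^'n) \<Rightarrow> _) \<in> borel_measurable borel"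
    and snd_m: "(snd :: (real^'n) \<times> (real^'n) \<Rightarrow> _) \<in> borel_measurable borel"
    by (intro borel_measurable_continuous_onI continuous_intros)+
  note swap_m = borel_measurable_swap_target(2)[OF T W]
  have fst_law: "distr ?\<mu> borel fst = P"
    using P.distr_pair_fst distr_cong[OF refl P(2)[symmetric], of ?\<mu> fst fst] by simp
  show "prob_space (distr ?\<mu> borel (swap_target W T))"
    using swap_m by (intro PP.prob_space_distr) (simp add: meas)
  show "sets (distr ?\<mu> borel (swap_target W T)) = sets borel"
    by simp
  have "distr (distr ?\<mu> borel (swap_target W T)) borel fst = distr ?\<mu> borel (fst \<circ> swap_target W T)"
    using swap_m fst_m by (intro distr_distr) (simp_all add: meas)
  also have "fst \<circ> swap_target W T = fst"
    by (simp add: fun_eq_iff swap_target_def)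
  finally show "distr (distr ?\<mu> borel (swap_target W T)) borel fst = P"
    using fst_law by simp
  have "distr (distr ?\<mu> borel (swap_target W T)) borel snd = distr ?\<mu> borel (snd \<circ> swap_target W T)"
    using swap_m snd_m by (intro distr_distr) (simp_all add: meas)
  also have "\<dots> = distr (distr ?\<mu> borel fst) borel T"
    unfolding distr_target_swap_target[OF P T W sym]
    using T fst_m by (intro distr_distr[symmetric]) (simp_all add: meas)
  finally show "distr (distr ?\<mu> borel (swap_target W T)) borel snd = distr P borel T"
    unfolding fst_law .
qed

lemma swap_cost_identity:
  fixes a b :: "'a::real_inner"
  shows "((norm (a - T b))\<^sup>2 - (norm (a - T a))\<^sup>2) + ((norm (b - T a))\<^sup>2 - (norm (b - T b))\<^sup>2)
     = 2 * ((a - b) \<bullet> (T a - T b))"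
  by (simp add: power2_norm_eq_inner inner_diff_left inner_diff_right inner_commute algebra_simps)

lemma integral_indicator_swap_union:
  fixes f :: "'a \<times> 'a \<Rightarrow> real"
  assumes "sigma_finite_measure M" and f: "integrable (M \<Otimes>\<^sub>M M) f"
    and AB: "A \<in> sets M" "B \<in> sets M" "A \<inter> B = {}"
  shows "(\<integral>p. indicator (A \<times> B \<union> B \<times> A) p * f p \<partial>(M \<Otimes>\<^sub>M M))
    = (\<integral>p. indicator (A \<times> B) p * (f p + f (snd p, fst p)) \<partial>(M \<Otimes>\<^sub>M M))"
proof -
  interpret pair_sigma_finite M M
    using assms(1) by (simp add: pair_sigma_finite_def)
  have sets: "A \<times> B \<in> sets (M \<Otimes>\<^sub>M M)" "B \<times> A \<in> sets (M \<Otimes>\<^sub>M M)"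
    using AB by auto
  have BA: "integrable (M \<Otimes>\<^sub>M M) (\<lambda>p. indicator (B \<times> A) p * f p)"
    using integrable_mult_indicator[OF sets(2) f] by simp
  have swap: "(\<lambda>(a, b). indicator (B \<times> A) (b, a) * f (b, a)) = (\<lambda>p. indicator (A \<times> B) p * f (snd p, fst p))"
    by (auto simp: fun_eq_iff indicator_def)
  have "indicator (A \<times> B \<union> B \<times> A) p * f p = indicator (A \<times> B) p * f p + indicator (B \<times> A) p * f p" for p
    using AB(3) by (auto simp: indicator_def)
  then have "(\<integral>p. indicator (A \<times> B \<union> B \<times> A) p * f p \<partial>(M \<Otimes>\<^sub>M M))
      = (\<integral>p. indicator (A \<times> B) p * f p \<partial>(M \<Otimes>\<^sub>M M)) + (\<integral>p. indicator (B \<times> A) p * f p \<partial>(M \<Otimes>\<^sub>M M))"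
    using integrable_mult_indicator[OF sets(1) f] BA by simp
  also have "(\<integral>p. indicator (B \<times> A) p * f p \<partial>(M \<Otimes>\<^sub>M M))
      = (\<integral>p. indicator (A \<times> B) p * f (snd p, fst p) \<partial>(M \<Otimes>\<^sub>M M))"
    using integral_product_swap[of "\<lambda>p. indicator (B \<times> A) p * f p"] BA unfolding swap by auto
  also have "(\<integral>p. indicator (A \<times> B) p * f p \<partial>(M \<Otimes>\<^sub>M M))
      + (\<integral>p. indicator (A \<times> B) p * f (snd p, fst p) \<partial>(M \<Otimes>\<^sub>M M))
      = (\<integral>p. indicator (A \<times> B) p * (f p + f (snd p, fst p)) \<partial>(M \<Otimes>\<^sub>M M))"
  proof -
    have "integrable (M \<Otimes>\<^sub>M M) (\<lambda>p. indicator (A \<times> B) p * f (snd p, fst p))"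
      using integrable_product_swap[OF BA] unfolding swap .
    then show ?thesis
      using integrable_mult_indicator[OF sets(1) f] by (simp add: distrib_left)
  qed
  finally show ?thesis .
qed

lemma integrable_power2_norm_diff:
  fixes f g :: "'a \<Rightarrow> 'b::real_normed_vector"
  assumes "integrable M (\<lambda>\<omega>. (norm (f \<omega>))\<^sup>2)" "integrable M (\<lambda>\<omega>. (norm (g \<omega>))\<^sup>2)"
    and "(\<lambda>\<omega>. (norm (f \<omega> - g \<omega>))\<^sup>2) \<in> borel_measurable M"
  shows "integrable M (\<lambda>\<omega>. (norm (f \<omega> - g \<omega>))\<^sup>2)"
proof (rule Bochner_Integration.integrable_bound)
  show "integrable M (\<lambda>\<omega>. 2 * (norm (f \<omega>))\<^sup>2 + 2 * (norm (g \<omega>))\<^sup>2)"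
    using assms(1,2) by simp
  have "(norm (a - b))\<^sup>2 \<le> 2 * (norm a)\<^sup>2 + 2 * (norm b)\<^sup>2" for a b :: 'b
  proof -
    have "(norm (a - b))\<^sup>2 \<le> (norm a + norm b)\<^sup>2"
      by (intro power_mono norm_triangle_ineq4) simp
    also have "\<dots> \<le> 2 * (norm a)\<^sup>2 + 2 * (norm b)\<^sup>2"
      using sum_squares_bound[of "norm a" "norm b"] by (simp add: power2_sum)
    finally show ?thesis .
  qed
  then show "AE \<omega> in M. norm ((norm (f \<omega> - g \<omega>))\<^sup>2) \<le> norm (2 * (norm (f \<omega>))\<^sup>2 + 2 * (norm (g \<omega>))\<^sup>2)"
    by (intro AE_I2) simp
qed (use assms(3) in simp)

lemma integrable_power2_norm_diff_map:
  fixes T :: "real^'n \<Rightarrow> real^'n"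
  assumes "sets P = sets borel" "continuous_on UNIV T"
    and "integrable P (\<lambda>x. (norm x)\<^sup>2)" "integrable P (\<lambda>x. (norm (T x))\<^sup>2)"
  shows "integrable P (\<lambda>x. (norm (x - T x))\<^sup>2)"
  using assms by (intro integrable_power2_norm_diff)
    (simp_all add: measurable_cong_sets[OF assms(1) refl] borel_measurable_continuous_onI continuous_intros)

lemma integrable_pair_fst:
  fixes h :: "'a \<Rightarrow> real"
  assumes "prob_space P" "integrable P h"
  shows "integrable (P \<Otimes>\<^sub>M P) (\<lambda>p. h (fst p))"
proof -
  interpret prob_space P by (rule assms(1))
  have "integrable (distr (P \<Otimes>\<^sub>M P) P fst) h"
    using assms(2) by (simp add: distr_pair_fst)
  then show ?thesis
    using integrable_distr_eq[of fst "P \<Otimes>\<^sub>M P" P h] borel_measurable_integrable[OF assms(2)] by simp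
qed

lemma integrable_pair_snd:
  fixes h :: "'a \<Rightarrow> real"
  assumes "prob_space P" "integrable P h"
  shows "integrable (P \<Otimes>\<^sub>M P) (\<lambda>p. h (snd p))"
proof -
  interpret pair_prob_space P P
    using assms(1) by (simp add: pair_prob_space_def pair_sigma_finite_def prob_space_imp_sigma_finite)
  have "integrable (P \<Otimes>\<^sub>M P) (\<lambda>(a, b). h (fst (b, a)))"
    by (rule integrable_product_swap) (rule integrable_pair_fst[OF assms])
  then show ?thesis
    by (simp add: case_prod_beta')
qed

text \<open>The contributions of \<open>A \<times> B\<close> and \<open>B \<times> A\<close> are combined by the symmetry of \<open>P \<Otimes> P\<close>
  and \<open>swap_cost_identity\<close>.\<close>
lemma integral_cost_swap_target:
  fixes P :: "(real^'n) measure" and T :: "real^'n \<Rightarrow> real^'n" and A B :: "(real^'n) set"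
  defines "\<sigma> \<equiv> swap_target (A \<times> B \<union> B \<times> A) T"
    and "\<Delta> \<equiv> \<lambda>p. indicator (A \<times> B) p * ((fst p - snd p) \<bullet> (T (fst p) - T (snd p)))"
  assumes P: "prob_space P" "sets P = sets borel" and T: "continuous_on UNIV T"
    and int_id: "integrable P (\<lambda>x. (norm x)\<^sup>2)" and int_T: "integrable P (\<lambda>x. (norm (T x))\<^sup>2)"
    and AB: "A \<in> sets borel" "B \<in> sets borel" "A \<inter> B = {}"
  shows "integrable (P \<Otimes>\<^sub>M P) (\<lambda>p. (norm (fst (\<sigma> p) - snd (\<sigma> p)))\<^sup>2)"
    and "integrable (P \<Otimes>\<^sub>M P) \<Delta>"
    and "(\<integral>p. (norm (fst (\<sigma> p) - snd (\<sigma> p)))\<^sup>2 \<partial>(P \<Otimes>\<^sub>M P))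
      = (\<integral>x. (norm (x - T x))\<^sup>2 \<partial>P) + 2 * (\<integral>p. \<Delta> p \<partial>(P \<Otimes>\<^sub>M P))"
proof -
  interpret P: prob_space P by (rule P(1))
  let ?\<mu> = "P \<Otimes>\<^sub>M P" and ?W = "A \<times> B \<union> B \<times> A"
  have meas: "measurable ?\<mu> N = measurable borel N" for N :: "'z measure"
    by (rule measurable_cong_sets[OF sets_pair_borel[OF P(2)] refl])
  note int_diff = integrable_power2_norm_diff_map[OF P(2) T int_id int_T]
  define c where "c p = (norm (fst p - T (fst p)))\<^sup>2" for p :: "(real^'n) \<times> (real^'n)"
  define f where "f p = (norm (fst p - T (snd p)))\<^sup>2 - c p" for p :: "(real^'n) \<times> (real^'n)"
  have c: "integrable ?\<mu> c"
    unfolding c_def by (rule integrable_pair_fst[OF P(1) int_diff])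
  have "integrable ?\<mu> (\<lambda>p. (norm (fst p - T (snd p)))\<^sup>2)"
    using integrable_pair_fst[OF P(1) int_id] integrable_pair_snd[OF P(1) int_T] T
    by (intro integrable_power2_norm_diff) (simp_all add: meas borel_measurable_continuous_onI
        continuous_intros continuous_on_compose2[OF T])
  then have f: "integrable ?\<mu> f"
    unfolding f_def using c by simp
  have W: "?W \<in> sets ?\<mu>"
    using AB P(2) by auto
  have cost: "(norm (fst (\<sigma> p) - snd (\<sigma> p)))\<^sup>2 = c p + indicator ?W p * f p" for p
    by (simp add: \<sigma>_def swap_target_def c_def f_def indicator_def)
  show "integrable ?\<mu> (\<lambda>p. (norm (fst (\<sigma> p) - snd (\<sigma> p)))\<^sup>2)"
    unfolding cost using c integrable_mult_indicator[OF W f] by simp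
  have swap_f: "indicator (A \<times> B) p * (f p + f (snd p, fst p)) = 2 * \<Delta> p" for p
    using swap_cost_identity[of "fst p" T "snd p"] by (simp add: \<Delta>_def f_def c_def)
  have "integrable ?\<mu> (\<lambda>p. f (snd p, fst p))"
    using pair_sigma_finite.integrable_product_swap[OF _ f] P.sigma_finite_measure_axioms
    by (simp add: pair_sigma_finite_def case_prod_beta')
  then have "integrable ?\<mu> (\<lambda>p. indicator (A \<times> B) p * (f p + f (snd p, fst p)))"
    using integrable_mult_indicator[of "A \<times> B" ?\<mu> "\<lambda>p. f p + f (snd p, fst p)"] f AB P(2) by simp
  then show "integrable ?\<mu> \<Delta>"
    unfolding swap_f by simp
  have "(\<integral>p. (norm (fst (\<sigma> p) - snd (\<sigma> p)))\<^sup>2 \<partial>?\<mu>)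
      = (\<integral>p. c p \<partial>?\<mu>) + (\<integral>p. indicator (A \<times> B) p * (f p + f (snd p, fst p)) \<partial>?\<mu>)"
    unfolding cost using c integrable_mult_indicator[OF W f] AB P(2)
      integral_indicator_swap_union[OF P.sigma_finite_measure_axioms f, of A B]
    by simp
  also have "(\<integral>p. c p \<partial>?\<mu>) = (\<integral>x. (norm (x - T x))\<^sup>2 \<partial>distr ?\<mu> P fst)"
    unfolding c_def using borel_measurable_integrable[OF int_diff]
    by (intro integral_distr[symmetric]) simp_all
  also have "\<dots> = (\<integral>x. (norm (x - T x))\<^sup>2 \<partial>P)"
    by (simp add: P.distr_pair_fst)
  finally show "(\<integral>p. (norm (fst (\<sigma> p) - snd (\<sigma> p)))\<^sup>2 \<partial>?\<mu>)
      = (\<integral>x. (norm (x - T x))\<^sup>2 \<partial>P) + 2 * (\<integral>p. \<Delta> p \<partial>?\<mu>)"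
    unfolding swap_f by simp
qed

lemma integral_indicator_mult_less_0:
  fixes f :: "'a \<Rightarrow> real"
  assumes "finite_measure M" and A: "A \<in> sets M" "emeasure M A \<noteq> 0"
    and int: "integrable M (\<lambda>x. indicator A x * f x)" and neg: "\<And>x. x \<in> A \<Longrightarrow> f x < 0"
  shows "(\<integral>x. indicator A x * f x \<partial>M) < 0"
proof -
  interpret finite_measure M by (rule assms(1))
  have "(\<integral>x. indicator A x * f x \<partial>M) < (\<integral>x. 0 \<partial>M)"
  proof (rule integral_less_AE[OF int _ A(2,1)])
    show "AE x in M. x \<in> A \<longrightarrow> indicator A x * f x \<noteq> 0"
      using neg by (auto intro!: AE_I2 dest: less_imp_neq)
    show "AE x in M. indicator A x * f x \<le> 0"
      using neg by (intro AE_I2) (simp add: indicator_def less_imp_le)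
  qed simp
  then show ?thesis
    by simp
qed

lemma integrable_comp_graph:
  fixes T :: "real^'n \<Rightarrow> real^'n" and f :: "(real^'n) \<times> (real^'n) \<Rightarrow> real"
  assumes P: "sets P = sets borel" and T: "continuous_on UNIV T"
    and f: "integrable (distr P borel (\<lambda>x. (x, T x))) f"
  shows "integrable P (\<lambda>x. f (x, T x))"
proof -
  have "(\<lambda>x. (x, T x)) \<in> measurable P borel"
    unfolding measurable_cong_sets[OF P refl] using T
    by (intro borel_measurable_continuous_onI continuous_intros)
  moreover have "f \<in> borel_measurable borel"
    using borel_measurable_integrable[OF f] by simp
  ultimately show ?thesis
    using integrable_distr_eq f by blast
qed

lemma ot_map_monotone_on_support:
  fixes T :: "real^'n \<Rightarrow> real^'n"
  assumes P0: "prob_space P0" "sets P0 = sets borel" and ot: "ot_map P0 P1 T"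
    and T: "continuous_on UNIV T"
    and int_id: "integrable P0 (\<lambda>x. (norm x)\<^sup>2)" and int_T: "integrable P0 (\<lambda>x. (norm (T x))\<^sup>2)"
    and x: "x \<in> measure_support P0" and y: "y \<in> measure_support P0"
  shows "0 \<le> (T x - T y) \<bullet> (x - y)"
proof (rule ccontr)
  assume "\<not> ?thesis"
  then have "(x - y) \<bullet> (T x - T y) < 0"
    by (simp add: inner_commute)
  with T obtain A B where AB: "open A" "open B" "x \<in> A" "y \<in> B" "A \<inter> B = {}"
    and neg: "\<And>a b. a \<in> A \<Longrightarrow> b \<in> B \<Longrightarrow> (a - b) \<bullet> (T a - T b) < 0"
    by (rule inner_diff_neg_near) (erule that)
  interpret P: prob_space P0 by (rule P0(1))
  interpret \<mu>: prob_space "P0 \<Otimes>\<^sub>M P0" by (intro prob_space_pair P0(1))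
  let ?\<mu> = "P0 \<Otimes>\<^sub>M P0" and ?\<sigma> = "swap_target (A \<times> B \<union> B \<times> A) T"
  let ?\<Delta> = "\<lambda>p. indicator (A \<times> B) p * ((fst p - snd p) \<bullet> (T (fst p) - T (snd p)))"
  note cost = integral_cost_swap_target[OF P0 T int_id int_T _ _ AB(5)]
  have T_m: "T \<in> borel_measurable borel"
    using T by (rule borel_measurable_continuous_onI)
  have "A \<times> B \<union> B \<times> A \<in> sets borel"
    using AB by (intro borel_open open_Un open_Times)
  then have "coupling P0 P1 (distr ?\<mu> borel ?\<sigma>)"
    using ot unfolding ot_map_def by (auto intro: coupling_swap_target[OF P0 T_m])
  then have "(\<integral>\<^sup>+x. ennreal ((norm (x - T x))\<^sup>2) \<partial>P0) \<le> (\<integral>\<^sup>+p. ennreal ((norm (fst p - snd p))\<^sup>2) \<partial>distr ?\<mu> borel ?\<sigma>)"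
    using ot unfolding ot_map_def by blast
  also have "\<dots> = (\<integral>\<^sup>+p. ennreal ((norm (fst (?\<sigma> p) - snd (?\<sigma> p)))\<^sup>2) \<partial>?\<mu>)"
    using borel_measurable_swap_target(2)[OF T_m \<open>_ \<in> sets borel\<close>] P0(2)
    by (subst nn_integral_distr) (simp_all add: measurable_cong_sets[OF sets_pair_borel[OF P0(2)] refl]
        borel_measurable_continuous_onI continuous_intros)
  also have "\<dots> = ennreal (\<integral>p. (norm (fst (?\<sigma> p) - snd (?\<sigma> p)))\<^sup>2 \<partial>?\<mu>)"
    using cost(1) AB by (intro nn_integral_eq_integral) auto
  finally have "(\<integral>x. (norm (x - T x))\<^sup>2 \<partial>P0) \<le> (\<integral>p. (norm (fst (?\<sigma> p) - snd (?\<sigma> p)))\<^sup>2 \<partial>?\<mu>)"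
    using integrable_power2_norm_diff_map[OF P0(2) T int_id int_T]
    by (subst (asm) nn_integral_eq_integral) auto
  moreover have "(\<integral>p. ?\<Delta> p \<partial>?\<mu>) < 0"
  proof (rule integral_indicator_mult_less_0[OF \<mu>.finite_measure_axioms])
    show "emeasure ?\<mu> (A \<times> B) \<noteq> 0"
      using measure_support_open_nonnull[OF x AB(1,3)] measure_support_open_nonnull[OF y AB(2,4)]
        AB(1,2) P0(2)
      by (simp add: P.emeasure_pair_measure_Times)
    show "A \<times> B \<in> sets ?\<mu>"
      using AB P0(2) by simp
    show "integrable ?\<mu> ?\<Delta>"
      using cost(2) AB by simp
  qed (use neg in auto)
  ultimately show False
    using cost(3) AB by simp
qed

theorem theorem2p5:
  fixes P0 P1 :: "(real^'n) measure"
    and \<gamma> :: "((real^'n) \<times> (real^'n)) measure"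
    and \<rho> :: "real \<Rightarrow> real^'n \<Rightarrow> real"
    and v :: "real \<Rightarrow> real^'n \<Rightarrow> real^'n"
    and C :: "real \<Rightarrow> real^'n \<Rightarrow> real^'n^'n"
  assumes P0: "prob_space P0" "sets P0 = sets borel"
    and P1: "prob_space P1" "sets P1 = sets borel"
    and \<gamma>: "coupling P0 P1 \<gamma>"
    and dens: "\<forall>t\<in>{0..1}. \<rho> t \<in> borel_measurable borel \<and> (\<forall>x. 0 \<le> \<rho> t x) \<and>
                 distr \<gamma> lborel (interp t) = density lborel (\<lambda>x. ennreal (\<rho> t x))"
    and vel_cond: "\<forall>t\<in>{0..1}. cond_exp_given \<gamma> (interp t) vel (v t)"
    and C_cond: "\<forall>t\<in>{0..1}. cond_exp_given \<gamma> (interp t) (\<lambda>p. outer (vel p) (vel p)) (C t)"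
    and flow: "\<exists>\<phi> :: real \<Rightarrow> real^'n \<Rightarrow> real^'n.
                 (\<forall>x. \<phi> 0 x = x \<and> C2_path_on {0..1} (\<lambda>t. \<phi> t x) \<and>
                      (\<forall>t\<in>{0..1}. ((\<lambda>s. \<phi> s x) has_vector_derivative v t (\<phi> t x)) (at t within {0..1}))) \<and>
                 (\<forall>t\<in>{0..1}. \<exists>g. homeomorphism UNIV UNIV (\<phi> t) g)"
    and v_C1: "C1_on ({0..1} \<times> UNIV) (\<lambda>p. v (fst p) (snd p))"
    and mom_X: "\<forall>t\<in>{0..1}. integrable \<gamma> (\<lambda>p. (norm (interp t p))\<^sup>2)"
    and mom_Pi: "\<forall>t\<in>{0..1}. integrable \<gamma> (\<lambda>p. (norm (reynolds C v t (interp t p)))\<^sup>2)"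
    and Pi_cont: "\<forall>x. continuous (at 1 within {0..1}) (\<lambda>t. reynolds C v t x)"
  shows
    "((\<forall>t\<in>{0..1}. weak_div_zero (\<lambda>x. \<rho> t x *\<^sub>R reynolds C v t x)) \<longrightarrow>
        (\<exists>T. T \<in> borel_measurable borel \<and> distr P0 borel T = P1 \<and>
             distr P0 borel (\<lambda>x. (x, T x)) = \<gamma>))
     \<and> (\<forall>T. T \<in> borel_measurable borel \<and> distr P0 borel T = P1 \<and>
             distr P0 borel (\<lambda>x. (x, T x)) = \<gamma> \<and>
             (\<forall>x. T differentiable (at x) \<and> (\<forall>h. 0 \<le> h \<bullet> (jacobian T (at x) *v h))) \<longrightarrow>
          (\<forall>t\<in>{0..<1}. weak_div_zero (\<lambda>x. \<rho> t x *\<^sub>R reynolds C v t x)))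
     \<and> (\<forall>T. ot_map P0 P1 T \<and> (\<forall>x. T differentiable (at x)) \<and>
             continuous_on UNIV (\<lambda>x. jacobian T (at x)) \<and>
             distr P0 borel (\<lambda>x. (x, T x)) = \<gamma> \<longrightarrow>
          (\<forall>t\<in>{0..<1}. weak_div_zero (\<lambda>x. \<rho> t x *\<^sub>R reynolds C v t x)))"
proof -
  have sufficient: "\<forall>t\<in>{0..<1}. weak_div_zero (\<lambda>x. \<rho> t x *\<^sub>R reynolds C v t x)"
    if "distr P0 borel (\<lambda>x. (x, T x)) = \<gamma>" "continuous_on UNIV T" "closed S" "AE x in P0. x \<in> S"
      "\<And>x y. x \<in> S \<Longrightarrow> y \<in> S \<Longrightarrow> 0 \<le> (T x - T y) \<bullet> (x - y)" for T S
    using reynolds_div_zero_if_monotone_graph[OF P0(2) that] dens vel_cond C_cond by auto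
  have continuous: "continuous_on UNIV T" if "\<forall>x. T differentiable (at x)" for T :: "real^'n \<Rightarrow> real^'n"
    using that by (meson continuous_at_imp_continuous_on differentiable_imp_continuous_within)
  show ?thesis
  proof (intro conjI allI impI)
    assume "\<forall>t\<in>{0..1}. weak_div_zero (\<lambda>x. \<rho> t x *\<^sub>R reynolds C v t x)"
    then show "\<exists>T. T \<in> borel_measurable borel \<and> distr P0 borel T = P1 \<and> distr P0 borel (\<lambda>x. (x, T x)) = \<gamma>"
      using dens vel_cond C_cond mom_Pi
      by (intro graph_coupling_if_reynolds_div_zero[OF \<gamma>, where \<rho> = \<rho> and v = v and C = C]) auto
  next
    fix T :: "real^'n \<Rightarrow> real^'n"
    assume "T \<in> borel_measurable borel \<and> distr P0 borel T = P1 \<and> distr P0 borel (\<lambda>x. (x, T x)) = \<gamma> \<and>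
      (\<forall>x. T differentiable (at x) \<and> (\<forall>h. 0 \<le> h \<bullet> (jacobian T (at x) *v h)))"
    then show "\<forall>t\<in>{0..<1}. weak_div_zero (\<lambda>x. \<rho> t x *\<^sub>R reynolds C v t x)"
      using continuous monotone_if_jacobian_psd by (intro sufficient[of T UNIV]) auto
  next
    fix T :: "real^'n \<Rightarrow> real^'n"
    assume T: "ot_map P0 P1 T \<and> (\<forall>x. T differentiable (at x)) \<and>
      continuous_on UNIV (\<lambda>x. jacobian T (at x)) \<and> distr P0 borel (\<lambda>x. (x, T x)) = \<gamma>"
    then have T_cont: "continuous_on UNIV T"
      using continuous by blast
    have "integrable P0 (\<lambda>x. (norm (interp t (x, T x)))\<^sup>2)" if "t \<in> {0..1}" for t
      using integrable_comp_graph[OF P0(2) T_cont, of "\<lambda>p. (norm (interp t p))\<^sup>2"] mom_X that T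
      by simp
    from this[of 0] this[of 1]
    have "integrable P0 (\<lambda>x. (norm x)\<^sup>2)" "integrable P0 (\<lambda>x. (norm (T x))\<^sup>2)"
      by (simp_all add: interp_def)
    then show "\<forall>t\<in>{0..<1}. weak_div_zero (\<lambda>x. \<rho> t x *\<^sub>R reynolds C v t x)"
      using T T_cont P0 closed_measure_support AE_in_measure_support
      by (intro sufficient[of T "measure_support P0"] ot_map_monotone_on_support) auto
  qed
qed

end
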